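(* (1) Each of the following assignments on the generators of $FVB_n$ extends to a representation of $FVB_n$ (all generators not listed are fixed): (a) for $m\in\mathbb{Z}$, $\theta_{1,m}:FVB_n\to{\rm Aut}(F_{2n})$, $\theta_{1,m}(\sigma_i):x_i\mapsto x_{i+1}y_{i+1}^m,\ x_{i+1}\mapsto x_iy_{i+1}^{-m}$; $\theta_{1,m}(\rho_i):x_i\leftrightarrow x_{i+1},\ y_i\leftrightarrow y_{i+1}$; (b) $\theta_2:FVB_n\to{\rm Aut}(F_{2n+1})$, $\theta_2(\sigma_i):x_i\mapsto x_{i+1}y_{i+1}^z,\ x_{i+1}\mapsto x_i(y_{i+1}^{-1})^z$; $\theta_2(\rho_i):x_i\leftrightarrow x_{i+1},\ y_i\leftrightarrow y_{i+1}$; (c) $\theta_3:FVB_n\to{\rm Aut}(K)$, $\theta_3(\sigma_i):x_i\mapsto x_{i+1}y_{i+1},\ x_{i+1}\mapsto x_iy_{i+1}^{-1}$; $\theta_3(\rho_i):x_i\mapsto x_{i+1}z,\ x_{i+1}\mapsto x_iz^{-1},\ y_i\leftrightarrow y_{i+1}$; (d) $\theta_4:FVB_n\to{\rm Aut}(K)$, $\theta_4(\sigma_i):x_i\mapsto x_{i+1}y_{i+1},\ x_{i+1}\mapsto x_iy_{i+1}^{-1}$; $\theta_4(\rho_i):x_i\mapsto x_{i+1}^z,\ x_{i+1}\mapsto x_i^{z^{-1}},\ y_i\leftrightarrow y_{i+1}$. (2) For $m\ne0$, $\ker(\theta_{1,m})=\ker(\theta_2)=\ker(\theta_3)=\ker(\theta_4)=\ker(\theta)$,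 where $\theta:FVB_n\to{\rm Aut}(F_{2n})$ is the representation with $\theta(\sigma_i):x_i\mapsto x_{i+1}y_{i+1},\ x_{i+1}\mapsto x_iy_{i+1}^{-1}$ and $\theta(\rho_i):x_i\leftrightarrow x_{i+1},\ y_i\leftrightarrow y_{i+1}$.
   Context: $FVB_n$ is the flat virtual braid group: generators $\sigma_1,\dots,\sigma_{n-1},\rho_1,\dots,\rho_{n-1}$, relations $\sigma_i\sigma_j=\sigma_j\sigma_i$, $\rho_i\rho_j=\rho_j\rho_i$, $\sigma_i\rho_j=\rho_j\sigma_i$ for $|i-j|\ge2$; $\sigma_i\sigma_{i+1}\sigma_i=\sigma_{i+1}\sigma_i\sigma_{i+1}$; $\rho_i\rho_{i+1}\rho_i=\rho_{i+1}\rho_i\rho_{i+1}$; $\rho_i\rho_{i+1}\sigma_i=\sigma_{i+1}\rho_i\rho_{i+1}$; $\rho_i^2=\sigma_i^2=1$. $F_{2n}$ is free on $x_1,\dots,x_n,y_1,\dots,y_n$; $F_{2n+1}$ is free on $x_1,\dots,x_n,y_1,\dots,y_n,z$; $K=F_n*(F_n\times\mathbb{Z})=\langle x_1,\dots,x_n,y_1,\dots,y_n,z\mid [y_i,z]=1,\ i=1,\dots,n\rangle$. The notation $a^b$ denotes the conjugate $b^{-1}ab$, and "$a\leftrightarrow b$" means $a\mapsto b$, $b\mapsto a$. Automorphisms compose on the right: $(fg)(x)=g(f(x))$. *)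

theory Defs
  imports "HOL-Algebra.Algebra" "HOL-Algebra.Bij"
begin

text \<open>A word is a list of letters; a letter (a, True) stands for the generator a,
  (a, False) for its inverse.\<close>
type_synonym 'a word = "('a \<times> bool) list"

definition inv_word :: "'a word \<Rightarrow> 'a word" where
  "inv_word w = rev (map (\<lambda>(a, b). (a, \<not> b)) w)"

definition rel_eq :: "'a word \<Rightarrow> 'a word \<Rightarrow> 'a word" where
  "rel_eq u v = u @ inv_word v"

inductive pres_rel :: "'a word set \<Rightarrow> 'a word \<Rightarrow> 'a word \<Rightarrow> bool" for R where
  refl: "pres_rel R w w"
| sym: "pres_rel R v w \<Longrightarrow> pres_rel R w v"
| trans: "pres_rel R u v \<Longrightarrow> pres_rel R v w \<Longrightarrow> pres_rel R u w"
| cancel: "pres_rel R (u @ [(a, b), (a, \<not> b)] @ v) (u @ v)"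
| relator: "r \<in> R \<Longrightarrow> pres_rel R (u @ r @ v) (u @ v)"

definition pres_class :: "'a word set \<Rightarrow> 'a word \<Rightarrow> 'a word set" where
  "pres_class R w = {v. pres_rel R w v}"

definition presented_group :: "'a set \<Rightarrow> 'a word set \<Rightarrow> 'a word set monoid" where
  "presented_group S R =
     \<lparr>carrier = {pres_class R w | w. set w \<subseteq> S \<times> UNIV},
      monoid.mult = (\<lambda>c d. pres_class R ((SOME w. w \<in> c) @ (SOME w. w \<in> d))),
      one = pres_class R []\<rparr>"

definition pgen :: "'a word set \<Rightarrow> 'a \<Rightarrow> 'a word set" where
  "pgen R a = pres_class R [(a, True)]"

section \<open>Automorphism group with right composition: (f g)(x) = g(f(x))\<close>

definition AutR :: "('a, 'b) monoid_scheme \<Rightarrow> ('a \<Rightarrow> 'a) monoid" where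
  "AutR G = \<lparr>carrier = auto G, monoid.mult = (\<lambda>f g. compose (carrier G) g f),
             one = (\<lambda>x\<in>carrier G. x)\<rparr>"

datatype fvb_gen = Sig nat | Rho nat

definition fvb_gens :: "nat \<Rightarrow> fvb_gen set" where
  "fvb_gens n = {Sig i | i. 1 \<le> i \<and> i < n} \<union> {Rho i | i. 1 \<le> i \<and> i < n}"

definition sg :: "nat \<Rightarrow> fvb_gen \<times> bool" where "sg i = (Sig i, True)"
definition rh :: "nat \<Rightarrow> fvb_gen \<times> bool" where "rh i = (Rho i, True)"

definition fvb_rels :: "nat \<Rightarrow> fvb_gen word set" where
  "fvb_rels n =
     {rel_eq [sg i, sg j] [sg j, sg i] | i j. 1 \<le> i \<and> i < n \<and> 1 \<le> j \<and> j < n \<and> (i + 2 \<le> j \<or> j + 2 \<le> i)}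
   \<union> {rel_eq [rh i, rh j] [rh j, rh i] | i j. 1 \<le> i \<and> i < n \<and> 1 \<le> j \<and> j < n \<and> (i + 2 \<le> j \<or> j + 2 \<le> i)}
   \<union> {rel_eq [sg i, rh j] [rh j, sg i] | i j. 1 \<le> i \<and> i < n \<and> 1 \<le> j \<and> j < n \<and> (i + 2 \<le> j \<or> j + 2 \<le> i)}
   \<union> {rel_eq [sg i, sg (i+1), sg i] [sg (i+1), sg i, sg (i+1)] | i. 1 \<le> i \<and> i + 1 < n}
   \<union> {rel_eq [rh i, rh (i+1), rh i] [rh (i+1), rh i, rh (i+1)] | i. 1 \<le> i \<and> i + 1 < n}
   \<union> {rel_eq [rh i, rh (i+1), sg i] [sg (i+1), rh i, rh (i+1)] | i. 1 \<le> i \<and> i + 1 < n}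
   \<union> {[rh i, rh i] | i. 1 \<le> i \<and> i < n}
   \<union> {[sg i, sg i] | i. 1 \<le> i \<and> i < n}"

definition FVB :: "nat \<Rightarrow> fvb_gen word set monoid" where
  "FVB n = presented_group (fvb_gens n) (fvb_rels n)"

datatype fgen = Xg nat | Yg nat | Zg

definition gens2n :: "nat \<Rightarrow> fgen set" where
  "gens2n n = {Xg i | i. 1 \<le> i \<and> i \<le> n} \<union> {Yg i | i. 1 \<le> i \<and> i \<le> n}"

definition gens2n1 :: "nat \<Rightarrow> fgen set" where
  "gens2n1 n = gens2n n \<union> {Zg}"

text \<open>Relators of K = F_n * (F_n x Z): [y_i, z] = 1.\<close>
definition K_rels :: "nat \<Rightarrow> fgen word set" where
  "K_rels n = {rel_eq [(Yg i, True), (Zg, True)] [(Zg, True), (Yg i, True)] | i. 1 \<le> i \<and> i \<le> n}"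

definition conjg :: "('a, 'b) monoid_scheme \<Rightarrow> 'a \<Rightarrow> 'a \<Rightarrow> 'a" where
  "conjg G a b = inv\<^bsub>G\<^esub> b \<otimes>\<^bsub>G\<^esub> a \<otimes>\<^bsub>G\<^esub> b"

definition is_rep :: "nat \<Rightarrow> 'a set \<Rightarrow> 'a word set \<Rightarrow> (nat \<Rightarrow> 'a \<Rightarrow> 'a word set)
     \<Rightarrow> (nat \<Rightarrow> 'a \<Rightarrow> 'a word set) \<Rightarrow> (fvb_gen word set \<Rightarrow> 'a word set \<Rightarrow> 'a word set) \<Rightarrow> bool" where
  "is_rep n S R sig rho h \<longleftrightarrow>
     h \<in> hom (FVB n) (AutR (presented_group S R)) \<and>
     (\<forall>i. 1 \<le> i \<and> i < n \<longrightarrow> (\<forall>a\<in>S.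
        h (pgen (fvb_rels n) (Sig i)) (pgen R a) = sig i a \<and>
        h (pgen (fvb_rels n) (Rho i)) (pgen R a) = rho i a))"

definition swap_xy :: "fgen word set \<Rightarrow> nat \<Rightarrow> fgen \<Rightarrow> fgen word set" where
  "swap_xy R i a =
     (if a = Xg i then pgen R (Xg (i+1)) else if a = Xg (i+1) then pgen R (Xg i)
      else if a = Yg i then pgen R (Yg (i+1)) else if a = Yg (i+1) then pgen R (Yg i)
      else pgen R a)"

abbreviation F2n :: "nat \<Rightarrow> fgen word set monoid" where
  "F2n n \<equiv> presented_group (gens2n n) {}"
abbreviation F2n1 :: "nat \<Rightarrow> fgen word set monoid" where
  "F2n1 n \<equiv> presented_group (gens2n1 n) {}"
abbreviation Kgrp :: "nat \<Rightarrow> fgen word set monoid" where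
  "Kgrp n \<equiv> presented_group (gens2n1 n) (K_rels n)"

definition theta_sig :: "nat \<Rightarrow> nat \<Rightarrow> fgen \<Rightarrow> fgen word set" where
  "theta_sig n i a = (let G = F2n n; x = (\<lambda>j. pgen {} (Xg j)); y = (\<lambda>j. pgen {} (Yg j)) in
     if a = Xg i then x (i+1) \<otimes>\<^bsub>G\<^esub> y (i+1)
     else if a = Xg (i+1) then x i \<otimes>\<^bsub>G\<^esub> inv\<^bsub>G\<^esub> (y (i+1))
     else pgen {} a)"

definition theta_rho :: "nat \<Rightarrow> nat \<Rightarrow> fgen \<Rightarrow> fgen word set" where
  "theta_rho n i a = swap_xy {} i a"

definition theta1_sig :: "nat \<Rightarrow> int \<Rightarrow> nat \<Rightarrow> fgen \<Rightarrow> fgen word set" where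
  "theta1_sig n m i a = (let G = F2n n; x = (\<lambda>j. pgen {} (Xg j)); y = (\<lambda>j. pgen {} (Yg j)) in
     if a = Xg i then x (i+1) \<otimes>\<^bsub>G\<^esub> (y (i+1) [^]\<^bsub>G\<^esub> m)
     else if a = Xg (i+1) then x i \<otimes>\<^bsub>G\<^esub> (y (i+1) [^]\<^bsub>G\<^esub> (- m))
     else pgen {} a)"

definition theta1_rho :: "nat \<Rightarrow> int \<Rightarrow> nat \<Rightarrow> fgen \<Rightarrow> fgen word set" where
  "theta1_rho n m i a = swap_xy {} i a"

definition theta2_sig :: "nat \<Rightarrow> nat \<Rightarrow> fgen \<Rightarrow> fgen word set" where
  "theta2_sig n i a = (let G = F2n1 n; x = (\<lambda>j. pgen {} (Xg j)); y = (\<lambda>j. pgen {} (Yg j)); z = pgen {} Zg in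
     if a = Xg i then x (i+1) \<otimes>\<^bsub>G\<^esub> conjg G (y (i+1)) z
     else if a = Xg (i+1) then x i \<otimes>\<^bsub>G\<^esub> conjg G (inv\<^bsub>G\<^esub> (y (i+1))) z
     else pgen {} a)"

definition theta2_rho :: "nat \<Rightarrow> nat \<Rightarrow> fgen \<Rightarrow> fgen word set" where
  "theta2_rho n i a = swap_xy {} i a"

definition theta3_sig :: "nat \<Rightarrow> nat \<Rightarrow> fgen \<Rightarrow> fgen word set" where
  "theta3_sig n i a = (let R = K_rels n; G = Kgrp n; x = (\<lambda>j. pgen R (Xg j)); y = (\<lambda>j. pgen R (Yg j)) in
     if a = Xg i then x (i+1) \<otimes>\<^bsub>G\<^esub> y (i+1)
     else if a = Xg (i+1) then x i \<otimes>\<^bsub>G\<^esub> inv\<^bsub>G\<^esub> (y (i+1))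
     else pgen R a)"

definition theta3_rho :: "nat \<Rightarrow> nat \<Rightarrow> fgen \<Rightarrow> fgen word set" where
  "theta3_rho n i a = (let R = K_rels n; G = Kgrp n; x = (\<lambda>j. pgen R (Xg j)); z = pgen R Zg in
     if a = Xg i then x (i+1) \<otimes>\<^bsub>G\<^esub> z
     else if a = Xg (i+1) then x i \<otimes>\<^bsub>G\<^esub> inv\<^bsub>G\<^esub> z
     else swap_xy R i a)"

definition theta4_sig :: "nat \<Rightarrow> nat \<Rightarrow> fgen \<Rightarrow> fgen word set" where
  "theta4_sig n i a = theta3_sig n i a"

definition theta4_rho :: "nat \<Rightarrow> nat \<Rightarrow> fgen \<Rightarrow> fgen word set" where
  "theta4_rho n i a = (let R = K_rels n; G = Kgrp n; x = (\<lambda>j. pgen R (Xg j)); z = pgen R Zg in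
     if a = Xg i then conjg G (x (i+1)) z
     else if a = Xg (i+1) then conjg G (x i) (inv\<^bsub>G\<^esub> z)
     else swap_xy R i a)"

end

theory Submission
  imports Defs
begin

text \<open>
  (1) Each assignment induces an endomorphism of the free group or of \<open>K\<close> (for \<open>K\<close>, the
  images of \<open>y\<^sub>j\<close> and \<open>z\<close> still commute); the images of \<open>\<sigma>\<^sub>i\<close> and \<open>\<rho>\<^sub>i\<close> are involutions, hence
  automorphisms, and the defining relations of \<open>FVB\<^sub>n\<close> need only be checked on generators.

  (2) Kernels are compared through homomorphisms intertwining two representations on the
  generators, hence everywhere. Killing \<open>z\<close> turns \<open>\<theta>\<^sub>2\<close>, \<open>\<theta>\<^sub>3\<close>, \<open>\<theta>\<^sub>4\<close> into \<open>\<theta>\<close>. Conversely,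
  \<open>y\<^sub>j \<mapsto> y\<^sub>j\<^sup>z\<close> intertwines \<open>\<theta>\<close> with \<open>\<theta>\<^sub>2\<close>, and \<open>x\<^sub>j \<mapsto> x\<^sub>j z\<^sup>j\<close>, \<open>y\<^sub>j \<mapsto> y\<^sub>j z\<^sup>-\<^sup>1\<close>
  intertwines \<open>\<theta>\<close> with \<open>\<theta>\<^sub>3\<close>; as \<open>z\<close> is fixed, an element acting trivially on these images acts
  trivially. For \<open>\<theta>\<^sub>1\<^sub>,\<^sub>m\<close> the endomorphism \<open>y\<^sub>j \<mapsto> y\<^sub>j\<^sup>m\<close> intertwines \<open>\<theta>\<close> with \<open>\<theta>\<^sub>1\<^sub>,\<^sub>m\<close>; it is
  injective for \<open>m \<noteq> 0\<close> (reduced words stay reduced), and \<open>\<theta>\<^sub>1\<^sub>,\<^sub>m\<close> permutes the \<open>y\<^sub>j\<close>, so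
  \<open>y\<^sub>j\<^sup>m\<close> fixed forces \<open>y\<^sub>j\<close> fixed. For \<open>\<theta>\<^sub>4\<close> there is no such homomorphism; instead, by induction
  on the braid, \<open>\<theta>\<^sub>4(\<beta>)(x\<^sub>i)\<close> is determined by \<open>\<theta>(\<beta>)(x\<^sub>i)\<close> up to a conjugation by a power of
  \<open>z\<close>, which vanishes when \<open>\<theta>(\<beta>)\<close> is the identity.
\<close>


lemma pres_rel_context: "pres_rel R u v \<Longrightarrow> pres_rel R (p @ u @ q) (p @ v @ q)"
proof (induction rule: pres_rel.induct)
  case (cancel u a b v)
  show ?case using pres_rel.cancel[of R "p @ u" a b "v @ q"] by simp
next
  case (relator r u v)
  show ?case using pres_rel.relator[OF relator, of "p @ u" "v @ q"] by simp
qed (auto intro: pres_rel.intros)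

lemma pres_rel_append: "pres_rel R u u' \<Longrightarrow> pres_rel R v v' \<Longrightarrow> pres_rel R (u @ v) (u' @ v')"
  using pres_rel_context[of R u u' "[]" v] pres_rel_context[of R v v' u' "[]"]
  by (auto intro: pres_rel.trans)

lemma pres_class_eq_iff: "pres_class R u = pres_class R v \<longleftrightarrow> pres_rel R u v"
  unfolding pres_class_def by (auto intro: pres_rel.intros)

lemma pres_rel_some_class: "pres_rel R u (SOME w. w \<in> pres_class R u)"
proof -
  have "u \<in> pres_class R u" by (simp add: pres_class_def pres_rel.refl)
  then show ?thesis using someI[of "\<lambda>w. w \<in> pres_class R u"] by (simp add: pres_class_def)
qed

lemma presented_group_mult:
  "pres_class R u \<otimes>\<^bsub>presented_group S R\<^esub> pres_class R v = pres_class R (u @ v)"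
  unfolding presented_group_def using pres_rel_some_class[of R u] pres_rel_some_class[of R v]
  by (simp add: pres_class_eq_iff pres_rel_append pres_rel.sym)

lemma presented_group_one: "\<one>\<^bsub>presented_group S R\<^esub> = pres_class R []"
  by (simp add: presented_group_def)

lemma presented_group_carrier:
  "carrier (presented_group S R) = {pres_class R w | w. set w \<subseteq> S \<times> UNIV}"
  by (simp add: presented_group_def)

lemma pres_class_closed: "set w \<subseteq> S \<times> UNIV \<Longrightarrow> pres_class R w \<in> carrier (presented_group S R)"
  by (auto simp: presented_group_carrier)

lemma pgen_closed: "a \<in> S \<Longrightarrow> pgen R a \<in> carrier (presented_group S R)"
  by (auto simp: pgen_def presented_group_carrier)

lemma inv_word_Nil [simp]: "inv_word [] = []"
  by (simp add: inv_word_def)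

lemma inv_word_Cons: "inv_word ((a, b) # u) = inv_word u @ [(a, \<not> b)]"
  by (simp add: inv_word_def)

lemma set_inv_word: "set w \<subseteq> S \<times> UNIV \<Longrightarrow> set (inv_word w) \<subseteq> S \<times> UNIV"
  by (auto simp: inv_word_def)

lemma pres_rel_inv_word_left: "pres_rel R (inv_word u @ u) []"
proof (induction u)
  case (Cons x u)
  obtain a b where x: "x = (a, b)" by fastforce
  have "pres_rel R (inv_word u @ [(a, \<not> b), (a, \<not> \<not> b)] @ u) (inv_word u @ u)"
    by (rule pres_rel.cancel)
  then show ?case using Cons by (auto simp: x inv_word_Cons intro: pres_rel.trans)
qed (simp add: pres_rel.refl)

lemma group_presented_group: "group (presented_group S R)"
proof (rule groupI)
  fix x y
  assume "x \<in> carrier (presented_group S R)" "y \<in> carrier (presented_group S R)"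
  then obtain u v where "x = pres_class R u" "y = pres_class R v"
    "set u \<subseteq> S \<times> UNIV" "set v \<subseteq> S \<times> UNIV"
    by (auto simp: presented_group_carrier)
  then show "x \<otimes>\<^bsub>presented_group S R\<^esub> y \<in> carrier (presented_group S R)"
    by (simp add: presented_group_mult pres_class_closed)
next
  show "\<one>\<^bsub>presented_group S R\<^esub> \<in> carrier (presented_group S R)"
    by (simp add: presented_group_one pres_class_closed)
next
  fix x y z
  assume "x \<in> carrier (presented_group S R)" "y \<in> carrier (presented_group S R)"
    "z \<in> carrier (presented_group S R)"
  then show "x \<otimes>\<^bsub>presented_group S R\<^esub> y \<otimes>\<^bsub>presented_group S R\<^esub> z =
      x \<otimes>\<^bsub>presented_group S R\<^esub> (y \<otimes>\<^bsub>presented_group S R\<^esub> z)"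
    by (auto simp: presented_group_carrier presented_group_mult)
next
  fix x
  assume "x \<in> carrier (presented_group S R)"
  then show "\<one>\<^bsub>presented_group S R\<^esub> \<otimes>\<^bsub>presented_group S R\<^esub> x = x"
    by (auto simp: presented_group_carrier presented_group_mult presented_group_one)
next
  fix x
  assume "x \<in> carrier (presented_group S R)"
  then obtain u where u: "x = pres_class R u" "set u \<subseteq> S \<times> UNIV"
    by (auto simp: presented_group_carrier)
  show "\<exists>y\<in>carrier (presented_group S R). y \<otimes>\<^bsub>presented_group S R\<^esub> x = \<one>\<^bsub>presented_group S R\<^esub>"
  proof
    show "pres_class R (inv_word u) \<otimes>\<^bsub>presented_group S R\<^esub> x = \<one>\<^bsub>presented_group S R\<^esub>"
      using u by (simp add: presented_group_mult presented_group_one pres_class_eq_iff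
          pres_rel_inv_word_left)
    show "pres_class R (inv_word u) \<in> carrier (presented_group S R)"
      using set_inv_word[OF u(2)] by (rule pres_class_closed)
  qed
qed

lemmas presented_group_closed =
  monoid.m_closed[OF group.is_monoid[OF group_presented_group]]
  group.inv_closed[OF group_presented_group]
  group.int_pow_closed[OF group_presented_group]
  monoid.one_closed[OF group.is_monoid[OF group_presented_group]]

lemma presented_group_inv:
  "set w \<subseteq> S \<times> UNIV \<Longrightarrow>
   inv\<^bsub>presented_group S R\<^esub> (pres_class R w) = pres_class R (inv_word w)"
  by (rule group.inv_equality[OF group_presented_group])
     (auto simp: presented_group_mult presented_group_one pres_class_eq_iff
       pres_rel_inv_word_left pres_class_closed set_inv_word)

lemma pres_class_Cons_pos:
  "pres_class R ((a, True) # w) = pgen R a \<otimes>\<^bsub>presented_group S R\<^esub> pres_class R w"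
  by (simp add: pgen_def presented_group_mult)

lemma pres_class_Cons_neg:
  "a \<in> S \<Longrightarrow> pres_class R ((a, False) # w) =
     inv\<^bsub>presented_group S R\<^esub> (pgen R a) \<otimes>\<^bsub>presented_group S R\<^esub> pres_class R w"
  by (simp add: pgen_def presented_group_inv inv_word_def presented_group_mult)

lemma pres_class_relator: "r \<in> R \<Longrightarrow> pres_class R r = \<one>\<^bsub>presented_group S R\<^esub>"
  using pres_rel.relator[of r R "[]" "[]"] by (simp add: presented_group_one pres_class_eq_iff)

lemma pres_class_rel_eq: "rel_eq u v \<in> R \<Longrightarrow> pres_class R u = pres_class R v"
proof -
  assume r: "rel_eq u v \<in> R"
  have "pres_rel R (u @ (inv_word v @ v) @ []) (u @ [] @ [])"
    by (rule pres_rel_context[OF pres_rel_inv_word_left])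
  moreover have "pres_rel R ([] @ rel_eq u v @ v) ([] @ v)"
    by (rule pres_rel.relator[OF r])
  ultimately show ?thesis
    by (auto simp: rel_eq_def pres_class_eq_iff intro: pres_rel.trans pres_rel.sym)
qed

lemma presented_group_induct [consumes 1, case_names one pos neg]:
  assumes "x \<in> carrier (presented_group S R)"
    and "P \<one>\<^bsub>presented_group S R\<^esub>"
    and "\<And>a y. a \<in> S \<Longrightarrow> y \<in> carrier (presented_group S R) \<Longrightarrow> P y \<Longrightarrow>
            P (pgen R a \<otimes>\<^bsub>presented_group S R\<^esub> y)"
    and "\<And>a y. a \<in> S \<Longrightarrow> y \<in> carrier (presented_group S R) \<Longrightarrow> P y \<Longrightarrow>
            P (inv\<^bsub>presented_group S R\<^esub> (pgen R a) \<otimes>\<^bsub>presented_group S R\<^esub> y)"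
  shows "P x"
proof -
  obtain w where w: "x = pres_class R w" "set w \<subseteq> S \<times> UNIV"
    using assms(1) by (auto simp: presented_group_carrier)
  have "P (pres_class R w)" using w(2)
  proof (induction w)
    case Nil
    then show ?case using assms(2) by (simp add: presented_group_one)
  next
    case (Cons l w)
    obtain a b where l: "l = (a, b)" by fastforce
    have "a \<in> S" "pres_class R w \<in> carrier (presented_group S R)" "P (pres_class R w)"
      using Cons l by (auto intro: pres_class_closed)
    then show ?case using assms(3,4)
      by (cases b) (auto simp: l pres_class_Cons_pos[where S = S] pres_class_Cons_neg[where S = S])
  qed
  then show ?thesis using w by simp
qed


definition eval_word :: "('g, 'm) monoid_scheme \<Rightarrow> ('a \<Rightarrow> 'g) \<Rightarrow> 'a word \<Rightarrow> 'g" where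
  "eval_word G f w = foldr (\<lambda>(a, b) g. (if b then f a else inv\<^bsub>G\<^esub> (f a)) \<otimes>\<^bsub>G\<^esub> g) w \<one>\<^bsub>G\<^esub>"

lemma eval_word_Nil [simp]: "eval_word G f [] = \<one>\<^bsub>G\<^esub>"
  by (simp add: eval_word_def)

lemma eval_word_Cons [simp]:
  "eval_word G f ((a, b) # w) = (if b then f a else inv\<^bsub>G\<^esub> (f a)) \<otimes>\<^bsub>G\<^esub> eval_word G f w"
  by (simp add: eval_word_def)

context group
begin

lemma eval_word_closed: "f \<in> UNIV \<rightarrow> carrier G \<Longrightarrow> eval_word G f w \<in> carrier G"
  by (induction w) (auto simp: Pi_iff)

lemma eval_word_append:
  "f \<in> UNIV \<rightarrow> carrier G \<Longrightarrow> eval_word G f (u @ v) = eval_word G f u \<otimes> eval_word G f v"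
  by (induction u) (auto simp: eval_word_closed m_assoc Pi_iff)

lemma eval_word_inv_word:
  "f \<in> UNIV \<rightarrow> carrier G \<Longrightarrow> eval_word G f (inv_word u) = inv (eval_word G f u)"
  by (induction u) (auto simp: inv_word_Cons eval_word_append eval_word_closed inv_mult_group Pi_iff)

lemma eval_word_rel_eq:
  "f \<in> UNIV \<rightarrow> carrier G \<Longrightarrow> eval_word G f u = eval_word G f v \<Longrightarrow> eval_word G f (rel_eq u v) = \<one>"
  by (simp add: rel_eq_def eval_word_append eval_word_inv_word eval_word_closed)

lemma eval_word_pres_rel:
  assumes f: "f \<in> UNIV \<rightarrow> carrier G" and R: "\<And>r. r \<in> R \<Longrightarrow> eval_word G f r = \<one>"
  shows "pres_rel R u v \<Longrightarrow> eval_word G f u = eval_word G f v"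
proof (induction rule: pres_rel.induct)
  case (cancel u a b v)
  have "f a \<in> carrier G" using f by auto
  then show ?case
    by (auto simp: eval_word_append[OF f] eval_word_closed[OF f] m_assoc[symmetric])
       (simp_all add: m_assoc eval_word_closed[OF f])
next
  case (relator r u v)
  show ?case using R[OF relator] by (simp add: eval_word_append[OF f] eval_word_closed[OF f])
qed auto

end

definition pres_lift :: "('g, 'm) monoid_scheme \<Rightarrow> 'a word set \<Rightarrow> ('a \<Rightarrow> 'g) \<Rightarrow> 'a word set \<Rightarrow> 'g" where
  "pres_lift G R f c = eval_word G f (SOME w. w \<in> c)"

context
  fixes G :: "('g, 'm) monoid_scheme" and R :: "'a word set" and f :: "'a \<Rightarrow> 'g"
  assumes G: "group G" and f: "f \<in> UNIV \<rightarrow> carrier G"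
    and R: "\<And>r. r \<in> R \<Longrightarrow> eval_word G f r = \<one>\<^bsub>G\<^esub>"
begin

lemma pres_lift_class: "pres_lift G R f (pres_class R w) = eval_word G f w"
  unfolding pres_lift_def using group.eval_word_pres_rel[OF G f R pres_rel_some_class[of R w]] by simp

lemma pres_lift_hom: "pres_lift G R f \<in> hom (presented_group S R) G"
  by (rule homI)
     (auto simp: presented_group_carrier presented_group_mult pres_lift_class
       group.eval_word_closed[OF G f] group.eval_word_append[OF G f])

lemma pres_lift_pgen: "pres_lift G R f (pgen R a) = f a"
  using f by (simp add: pgen_def pres_lift_class Pi_iff group.is_monoid[OF G])

end

lemma presented_group_hom_eqI:
  assumes G: "group G"
    and h1: "h1 \<in> hom (presented_group S R) G" and h2: "h2 \<in> hom (presented_group S R) G"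
    and eq: "\<And>a. a \<in> S \<Longrightarrow> h1 (pgen R a) = h2 (pgen R a)"
    and x: "x \<in> carrier (presented_group S R)"
  shows "h1 x = h2 x"
proof -
  interpret h1: group_hom "presented_group S R" G h1
    using G h1 group_presented_group by (simp add: group_hom_def group_hom_axioms_def)
  interpret h2: group_hom "presented_group S R" G h2
    using G h2 group_presented_group by (simp add: group_hom_def group_hom_axioms_def)
  from x show ?thesis
    by (induction rule: presented_group_induct) (auto simp: pgen_closed eq)
qed


lemma AutR_carrier [simp]: "carrier (AutR G) = auto G"
  by (simp add: AutR_def)

lemma AutR_one: "\<one>\<^bsub>AutR G\<^esub> = (\<lambda>x\<in>carrier G. x)"
  by (simp add: AutR_def)

lemma AutR_mult: "f \<otimes>\<^bsub>AutR G\<^esub> g = compose (carrier G) g f"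
  by (simp add: AutR_def)

lemma AutR_mult_apply: "x \<in> carrier G \<Longrightarrow> (f \<otimes>\<^bsub>AutR G\<^esub> g) x = g (f x)"
  by (simp add: AutR_def compose_eq)

lemma auto_closed: "f \<in> auto G \<Longrightarrow> x \<in> carrier G \<Longrightarrow> f x \<in> carrier G"
  by (auto simp: auto_def intro: hom_in_carrier)

lemma auto_extensional: "f \<in> auto G \<Longrightarrow> f \<in> extensional (carrier G)"
  by (simp add: auto_def Bij_def)

lemma auto_eqI: "f \<in> auto G \<Longrightarrow> g \<in> auto G \<Longrightarrow> (\<And>x. x \<in> carrier G \<Longrightarrow> f x = g x) \<Longrightarrow> f = g"
  by (rule extensionalityI[OF auto_extensional auto_extensional])

lemma group_AutR:
  assumes G: "group G"
  shows "group (AutR G)"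
proof (rule groupI)
  fix f g
  assume "f \<in> carrier (AutR G)" "g \<in> carrier (AutR G)"
  then show "f \<otimes>\<^bsub>AutR G\<^esub> g \<in> carrier (AutR G)"
    by (auto simp: AutR_mult auto_def group.hom_compose[OF G] compose_Bij)
next
  show "\<one>\<^bsub>AutR G\<^esub> \<in> carrier (AutR G)"
    using group.id_in_auto[OF G] by (simp add: AutR_one)
next
  fix f g k
  assume "f \<in> carrier (AutR G)" "g \<in> carrier (AutR G)" "k \<in> carrier (AutR G)"
  then have "f \<in> carrier G \<rightarrow> carrier G" "g \<in> carrier G \<rightarrow> carrier G" "k \<in> carrier G \<rightarrow> carrier G"
    by (auto simp: auto_closed)
  then show "f \<otimes>\<^bsub>AutR G\<^esub> g \<otimes>\<^bsub>AutR G\<^esub> k = f \<otimes>\<^bsub>AutR G\<^esub> (g \<otimes>\<^bsub>AutR G\<^esub> k)"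
    by (simp add: AutR_mult compose_assoc)
next
  fix f
  assume "f \<in> carrier (AutR G)"
  then show "\<one>\<^bsub>AutR G\<^esub> \<otimes>\<^bsub>AutR G\<^esub> f = f"
    by (auto simp: AutR_mult AutR_one auto_closed auto_extensional intro!: compose_Id)
next
  fix f
  assume "f \<in> carrier (AutR G)"
  then have fb: "f \<in> Bij (carrier G)" "f \<in> hom G G" by (auto simp: auto_def)
  let ?g = "\<lambda>x\<in>carrier G. inv_into (carrier G) f x"
  have "?g \<in> auto G"
    using group.restrict_inv_into_hom[OF G fb(2,1)] restrict_inv_into_Bij[OF fb(1)]
    by (simp add: auto_def)
  moreover have "compose (carrier G) f ?g = (\<lambda>x\<in>carrier G. x)"
    using fb(1) unfolding compose_def Bij_def bij_betw_def
    by (intro restrict_ext) (simp add: f_inv_into_f)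
  ultimately show "\<exists>g\<in>carrier (AutR G). g \<otimes>\<^bsub>AutR G\<^esub> f = \<one>\<^bsub>AutR G\<^esub>"
    by (auto simp: AutR_mult AutR_one)
qed

lemma auto_presented_group_eqI:
  assumes f: "f \<in> auto (presented_group S R)" and g: "g \<in> auto (presented_group S R)"
    and eq: "\<And>a. a \<in> S \<Longrightarrow> f (pgen R a) = g (pgen R a)"
  shows "f = g"
proof (rule auto_eqI[OF f g])
  fix x
  assume x: "x \<in> carrier (presented_group S R)"
  have hf: "f \<in> hom (presented_group S R) (presented_group S R)"
    and hg: "g \<in> hom (presented_group S R) (presented_group S R)"
    using f g by (simp_all add: auto_def)
  show "f x = g x"
    by (rule presented_group_hom_eqI[OF group_presented_group hf hg eq x])
qed

lemma involution_in_auto: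
  assumes f: "f \<in> hom (presented_group S R) (presented_group S R)"
    and ext: "f \<in> extensional (carrier (presented_group S R))"
    and inv: "\<And>a. a \<in> S \<Longrightarrow> f (f (pgen R a)) = pgen R a"
  shows "f \<in> auto (presented_group S R)"
proof -
  let ?G = "presented_group S R"
  have id: "(\<lambda>x\<in>carrier ?G. x) \<in> hom ?G ?G"
    using group.id_in_auto[OF group_presented_group[of S R]] by (simp add: auto_def)
  have ff: "compose (carrier ?G) f f \<in> hom ?G ?G"
    by (rule group.hom_compose[OF group_presented_group f f])
  have "compose (carrier ?G) f f x = (\<lambda>x\<in>carrier ?G. x) x" if "x \<in> carrier ?G" for x
    using presented_group_hom_eqI[OF group_presented_group ff id _ that] inv
    by (simp add: compose_eq pgen_closed)
  then have "f (f x) = x" if "x \<in> carrier ?G" for x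
    using that by (simp add: compose_eq)
  moreover have "f x \<in> carrier ?G" if "x \<in> carrier ?G" for x
    using f that by (rule hom_in_carrier)
  ultimately have "bij_betw f (carrier ?G) (carrier ?G)"
    by (intro bij_betw_byWitness[where f' = f]) auto
  then show ?thesis using f ext by (simp add: auto_def Bij_def)
qed


definition induces_hom :: "'a set \<Rightarrow> 'a word set \<Rightarrow> 'b set \<Rightarrow> 'b word set \<Rightarrow> ('a \<Rightarrow> 'b word set) \<Rightarrow> bool" where
  "induces_hom S R S' R' \<phi> \<longleftrightarrow> (\<forall>a\<in>S. \<phi> a \<in> carrier (presented_group S' R')) \<and>
     (\<forall>r\<in>R. eval_word (presented_group S' R') (\<lambda>a. if a \<in> S then \<phi> a else \<one>\<^bsub>presented_group S' R'\<^esub>) r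
        = \<one>\<^bsub>presented_group S' R'\<^esub>)"

text \<open>Restricted to the carrier, so that induced endomorphisms are extensional, as elements of
  \<open>auto\<close> must be.\<close>

definition induced_hom ::
  "'a set \<Rightarrow> 'a word set \<Rightarrow> 'b set \<Rightarrow> 'b word set \<Rightarrow> ('a \<Rightarrow> 'b word set) \<Rightarrow> 'a word set \<Rightarrow> 'b word set" where
  "induced_hom S R S' R' \<phi> = restrict
     (pres_lift (presented_group S' R') R (\<lambda>a. if a \<in> S then \<phi> a else \<one>\<^bsub>presented_group S' R'\<^esub>))
     (carrier (presented_group S R))"

lemma induces_hom_free:
  "(\<And>a. a \<in> S \<Longrightarrow> \<phi> a \<in> carrier (presented_group S' R')) \<Longrightarrow> induces_hom S {} S' R' \<phi>"
  by (simp add: induces_hom_def)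

context
  fixes S R S' R' \<phi>
  assumes \<phi>: "induces_hom S R S' R' \<phi>"
begin

private lemma total_assignment:
  "(\<lambda>a. if a \<in> S then \<phi> a else \<one>\<^bsub>presented_group S' R'\<^esub>) \<in> UNIV \<rightarrow> carrier (presented_group S' R')"
  using \<phi> presented_group_closed by (auto simp: induces_hom_def)

private lemmas lift_total = pres_lift_hom[OF group_presented_group total_assignment]
  pres_lift_pgen[OF group_presented_group total_assignment]

lemma induced_hom_hom: "induced_hom S R S' R' \<phi> \<in> hom (presented_group S R) (presented_group S' R')"
  unfolding induced_hom_def
  by (rule group.hom_restrict[OF group_presented_group lift_total(1)]) (use \<phi> in \<open>auto simp: induces_hom_def\<close>)

lemma group_hom_induced_hom:
  "group_hom (presented_group S R) (presented_group S' R') (induced_hom S R S' R' \<phi>)"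
  using induced_hom_hom by (simp add: group_hom_def group_hom_axioms_def group_presented_group)

lemma induced_hom_pgen: "a \<in> S \<Longrightarrow> induced_hom S R S' R' \<phi> (pgen R a) = \<phi> a"
  using \<phi> lift_total(2)[of R] by (simp add: induced_hom_def induces_hom_def pgen_closed)

end

lemma induced_hom_extensional: "induced_hom S R S' R' \<phi> \<in> extensional (carrier (presented_group S R))"
  by (simp add: induced_hom_def)

lemmas induced_hom_simps = induced_hom_pgen
  group_hom.hom_mult[OF group_hom_induced_hom] group_hom.hom_inv[OF group_hom_induced_hom]
  group_hom.hom_int_pow[OF group_hom_induced_hom] group_hom.hom_one[OF group_hom_induced_hom]

lemmas induced_hom_closed = group_hom.hom_closed[OF group_hom_induced_hom]


section \<open>Free reduction\<close>

definition cancels :: "'a \<times> bool \<Rightarrow> 'a \<times> bool \<Rightarrow> bool" where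
  "cancels x y \<longleftrightarrow> fst x = fst y \<and> snd x \<noteq> snd y"

fun push_letter :: "'a \<times> bool \<Rightarrow> 'a word \<Rightarrow> 'a word" where
  "push_letter x [] = [x]"
| "push_letter x (y # w) = (if cancels x y then w else x # y # w)"

definition reduce :: "'a word \<Rightarrow> 'a word" where
  "reduce w = foldr push_letter w []"

fun reduced :: "'a word \<Rightarrow> bool" where
  "reduced [] = True"
| "reduced [x] = True"
| "reduced (x # y # w) \<longleftrightarrow> \<not> cancels x y \<and> reduced (y # w)"

lemma reduced_tl: "reduced (x # w) \<Longrightarrow> reduced w"
  by (cases w) auto

lemma reduced_push_letter: "reduced w \<Longrightarrow> reduced (push_letter x w)"
  by (cases w) (auto intro: reduced_tl)

lemma reduce_Cons: "reduce (x # w) = push_letter x (reduce w)"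
  by (simp add: reduce_def)

lemma reduce_append: "reduce (u @ v) = foldr push_letter u (reduce v)"
  by (simp add: reduce_def)

lemma reduced_reduce: "reduced (reduce w)"
  by (induction w) (auto simp: reduce_def reduced_push_letter)

lemma reduce_reduced: "reduced w \<Longrightarrow> reduce w = w"
proof (induction w)
  case (Cons x w)
  then have "reduce w = w" using reduced_tl by blast
  then show ?case using Cons.prems by (cases w) (auto simp: reduce_Cons)
qed (simp add: reduce_def)

lemma push_letter_cancel: "reduced r \<Longrightarrow> push_letter (a, b) (push_letter (a, \<not> b) r) = r"
proof (induction r rule: reduced.induct)
  case (3 x y w)
  then show ?case by (cases x) (auto simp: cancels_def)
qed (auto simp: cancels_def)

lemma reduce_pres_rel: "pres_rel {} u v \<Longrightarrow> reduce u = reduce v"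
proof (induction rule: pres_rel.induct)
  case (cancel u a b v)
  show ?case by (simp add: reduce_append reduce_Cons push_letter_cancel reduced_reduce)
qed auto

lemma pres_rel_push_letter: "pres_rel {} (x # r) (push_letter x r)"
proof (cases r)
  case (Cons y r')
  show ?thesis
  proof (cases "cancels x y")
    case True
    then have "y = (fst x, \<not> snd x)" by (cases y) (auto simp: cancels_def)
    then show ?thesis
      using Cons True pres_rel.cancel[of "{}" "[]" "fst x" "snd x" r'] by simp
  qed (use Cons in \<open>simp add: pres_rel.refl\<close>)
qed (simp add: pres_rel.refl)

lemma pres_rel_reduce: "pres_rel {} w (reduce w)"
proof (induction w)
  case (Cons x w)
  have "pres_rel {} ([x] @ w @ []) ([x] @ reduce w @ [])"
    by (rule pres_rel_context[OF Cons])
  then show ?case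
    using pres_rel_push_letter[of x "reduce w"] by (auto simp: reduce_Cons intro: pres_rel.trans)
qed (simp add: reduce_def pres_rel.refl)

lemma set_reduce: "set (reduce w) \<subseteq> set w"
proof (induction w)
  case (Cons x w)
  have "set (push_letter x r) \<subseteq> insert x (set r)" for r
    by (cases r) auto
  then show ?case using Cons by (fastforce simp: reduce_Cons)
qed (simp add: reduce_def)

lemma reduced_replicate_append:
  "k \<ge> 1 \<Longrightarrow> reduced (replicate k x @ r) \<longleftrightarrow> reduced r \<and> (r \<noteq> [] \<longrightarrow> \<not> cancels x (hd r))"
proof (induction k)
  case (Suc k)
  then show ?case by (cases k; cases r) (auto simp: cancels_def)
qed simp


text \<open>As long as no exponent \<open>e a\<close> vanishes, substituting \<open>a\<^bsup>e a\<^esup>\<close> for each letter \<open>a\<close>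
  maps reduced words to nonempty reduced words; this makes the substitution injective.\<close>

definition power_letter :: "('a \<Rightarrow> int) \<Rightarrow> 'a \<times> bool \<Rightarrow> 'a word" where
  "power_letter e x = replicate (nat \<bar>e (fst x)\<bar>) (fst x, snd x = (0 \<le> e (fst x)))"

definition power_subst :: "('a \<Rightarrow> int) \<Rightarrow> 'a word \<Rightarrow> 'a word" where
  "power_subst e w = concat (map (power_letter e) w)"

lemma power_subst_Cons: "power_subst e (x # w) = power_letter e x @ power_subst e w"
  by (simp add: power_subst_def)

lemma power_subst_hd:
  assumes "\<And>a. e a \<noteq> 0" "w \<noteq> []"
  shows "power_subst e w \<noteq> [] \<and> hd (power_subst e w) = (fst (hd w), snd (hd w) = (0 \<le> e (fst (hd w))))"
proof -
  obtain x w' where w: "w = x # w'" using assms(2) by (cases w) auto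
  obtain k where "nat \<bar>e (fst x)\<bar> = Suc k" using assms(1)[of "fst x"] by (cases "nat \<bar>e (fst x)\<bar>") auto
  then show ?thesis by (simp add: w power_subst_Cons power_letter_def)
qed

lemma reduced_power_subst:
  assumes e: "\<And>a. e a \<noteq> 0"
  shows "reduced w \<Longrightarrow> reduced (power_subst e w)"
proof (induction w)
  case (Cons x w)
  have "\<not> cancels (fst x, snd x = (0 \<le> e (fst x))) (hd (power_subst e w))" if ne: "power_subst e w \<noteq> []"
  proof -
    obtain y w' where w: "w = y # w'" using ne by (cases w) (auto simp: power_subst_def)
    then have "\<not> cancels x y" using Cons.prems by simp
    then show ?thesis using power_subst_hd[OF e, of w] w by (auto simp: cancels_def)
  qed
  moreover have "nat \<bar>e (fst x)\<bar> \<ge> 1" using e[of "fst x"] by linarith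
  ultimately show ?case
    using Cons.IH[OF reduced_tl[OF Cons.prems]]
    by (simp add: power_subst_Cons power_letter_def reduced_replicate_append)
qed (simp add: power_subst_def)

lemma pres_class_replicate:
  "a \<in> S \<Longrightarrow> pres_class {} (replicate k (a, True)) = pgen {} a [^]\<^bsub>presented_group S {}\<^esub> k"
proof (induction k)
  case (Suc k)
  then show ?case
    using monoid.nat_pow_Suc2[OF group.is_monoid[OF group_presented_group] pgen_closed[OF Suc.prems]]
    by (simp add: pres_class_Cons_pos[where S = S])
qed (simp add: presented_group_one)

context
  fixes S :: "'a set" and e :: "'a \<Rightarrow> int"
begin

abbreviation power_hom :: "'a word set \<Rightarrow> 'a word set" where
  "power_hom \<equiv> induced_hom S {} S {} (\<lambda>a. pgen {} a [^]\<^bsub>presented_group S {}\<^esub> e a)"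

lemma induces_power_hom: "induces_hom S {} S {} (\<lambda>a. pgen {} a [^]\<^bsub>presented_group S {}\<^esub> e a)"
  by (rule induces_hom_free) (simp add: pgen_closed presented_group_closed)

lemma pres_class_power_letter:
  assumes a: "a \<in> S"
  shows "pres_class {} (power_letter e (a, True)) = pgen {} a [^]\<^bsub>presented_group S {}\<^esub> e a"
proof (cases "0 \<le> e a")
  case True
  then have "power_letter e (a, True) = replicate (nat (e a)) (a, True)"
    by (simp add: power_letter_def)
  moreover have "pgen {} a [^]\<^bsub>presented_group S {}\<^esub> e a = pgen {} a [^]\<^bsub>presented_group S {}\<^esub> nat (e a)"
    using True by (metis int_pow_int nat_0_le)
  ultimately show ?thesis using pres_class_replicate[OF a] by simp
next
  case False
  then have "power_letter e (a, True) = inv_word (replicate (nat (- e a)) (a, True))"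
    by (simp add: power_letter_def inv_word_def)
  moreover have "set (replicate (nat (- e a)) (a, True)) \<subseteq> S \<times> UNIV"
    using a by auto
  moreover have "pgen {} a [^]\<^bsub>presented_group S {}\<^esub> e a =
      inv\<^bsub>presented_group S {}\<^esub> (pgen {} a [^]\<^bsub>presented_group S {}\<^esub> nat (- e a))"
    using False group.int_pow_neg_int[OF group_presented_group pgen_closed[OF a], where n = "nat (- e a)"]
    by simp
  ultimately show ?thesis
    using pres_class_replicate[OF a] presented_group_inv[of "replicate (nat (- e a)) (a, True)" S "{}"]
    by simp
qed

lemma power_hom_class:
  "set w \<subseteq> S \<times> UNIV \<Longrightarrow> power_hom (pres_class {} w) = pres_class {} (power_subst e w)"
proof (induction w)
  case Nil
  then show ?case
    by (simp add: power_subst_def flip: presented_group_one[of S] add: induced_hom_simps[OF induces_power_hom])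
next
  case (Cons x w)
  obtain a b where x: "x = (a, b)" by fastforce
  have a: "a \<in> S" and w: "set w \<subseteq> S \<times> UNIV" using Cons.prems x by auto
  have letter: "pres_class {} (power_letter e (a, b)) =
      (if b then pgen {} a [^]\<^bsub>presented_group S {}\<^esub> e a
       else inv\<^bsub>presented_group S {}\<^esub> (pgen {} a [^]\<^bsub>presented_group S {}\<^esub> e a))"
  proof -
    have "power_letter e (a, False) = inv_word (power_letter e (a, True))"
      by (simp add: power_letter_def inv_word_def)
    moreover have "set (power_letter e (a, True)) \<subseteq> S \<times> UNIV"
      using a by (auto simp: power_letter_def)
    ultimately show ?thesis
      using pres_class_power_letter[OF a] presented_group_inv[of "power_letter e (a, True)" S "{}"]
      by (cases b) simp_all
  qed
  have "power_hom (pres_class {} ((a, b) # w)) =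
      pres_class {} (power_letter e (a, b)) \<otimes>\<^bsub>presented_group S {}\<^esub> power_hom (pres_class {} w)"
    using a w letter
    by (cases b) (simp_all add: pres_class_Cons_pos[where S = S] pres_class_Cons_neg[where S = S]
        induced_hom_simps[OF induces_power_hom] pgen_closed pres_class_closed presented_group_closed)
  then show ?case
    using Cons.IH[OF w] by (simp add: x power_subst_Cons presented_group_mult)
qed

lemma inj_on_power_hom:
  assumes e: "\<And>a. e a \<noteq> 0"
  shows "inj_on power_hom (carrier (presented_group S {}))"
proof -
  interpret group_hom "presented_group S {}" "presented_group S {}" power_hom
    by (rule group_hom_induced_hom[OF induces_power_hom])
  have "x = \<one>\<^bsub>presented_group S {}\<^esub>"
    if x: "x \<in> carrier (presented_group S {})" and one: "power_hom x = \<one>\<^bsub>presented_group S {}\<^esub>" for x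
  proof -
    obtain w where w: "x = pres_class {} w" "set w \<subseteq> S \<times> UNIV"
      using x by (auto simp: presented_group_carrier)
    let ?w = "reduce w"
    have x_red: "x = pres_class {} ?w"
      using w pres_rel_reduce[of w] by (simp add: pres_class_eq_iff)
    have "set ?w \<subseteq> S \<times> UNIV" using w(2) set_reduce[of w] by auto
    then have "pres_rel {} (power_subst e ?w) []"
      using one x_red power_hom_class by (simp add: presented_group_one pres_class_eq_iff)
    then have "reduce (power_subst e ?w) = reduce []" by (rule reduce_pres_rel)
    moreover have "reduce (power_subst e ?w) = power_subst e ?w"
      by (rule reduce_reduced[OF reduced_power_subst[OF e reduced_reduce]])
    ultimately have "power_subst e ?w = []" by (simp add: reduce_def)
    then have "?w = []" using power_subst_hd[of e ?w] e by blast
    then show ?thesis using x_red by (simp add: presented_group_one)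
  qed
  then show ?thesis by (simp add: inj_on_one_iff)
qed

end


definition weight :: "('a \<Rightarrow> int) \<Rightarrow> 'a word set \<Rightarrow> int" where
  "weight f = pres_lift integer_group {} f"

lemma group_hom_weight: "group_hom (presented_group S {}) integer_group (weight f)"
proof -
  have "pres_lift integer_group {} f \<in> hom (presented_group S {}) integer_group"
    by (rule pres_lift_hom) auto
  then show ?thesis
    by (simp add: weight_def group_hom_def group_hom_axioms_def group_presented_group)
qed

lemma weight_pgen [simp]: "weight f (pgen {} a) = f a"
  unfolding weight_def by (rule pres_lift_pgen) auto

lemmas weight_simps = weight_pgen
  group_hom.hom_mult[OF group_hom_weight, simplified]
  group_hom.hom_inv[OF group_hom_weight, simplified]
  group_hom.hom_int_pow[OF group_hom_weight, simplified]
  group_hom.hom_one[OF group_hom_weight, simplified]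

lemma pgen_free_inj: "pgen {} a = pgen {} b \<Longrightarrow> a = b"
  using weight_pgen[of "\<lambda>c. if c = a then 1 else 0"] by (metis one_neq_zero)


lemma fvb_gens_simps [simp]:
  "Sig i \<in> fvb_gens n \<longleftrightarrow> 1 \<le> i \<and> i < n" "Rho i \<in> fvb_gens n \<longleftrightarrow> 1 \<le> i \<and> i < n"
  by (auto simp: fvb_gens_def)

lemma fvb_gens_cases [consumes 1, case_names Sig Rho]:
  "g \<in> fvb_gens n \<Longrightarrow> (\<And>i. g = Sig i \<Longrightarrow> 1 \<le> i \<Longrightarrow> i < n \<Longrightarrow> P) \<Longrightarrow>
   (\<And>i. g = Rho i \<Longrightarrow> 1 \<le> i \<Longrightarrow> i < n \<Longrightarrow> P) \<Longrightarrow> P"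
  unfolding fvb_gens_def by blast

lemma group_FVB: "group (FVB n)"
  unfolding FVB_def by (rule group_presented_group)

lemma FVB_gen_closed: "g \<in> fvb_gens n \<Longrightarrow> pgen (fvb_rels n) g \<in> carrier (FVB n)"
  unfolding FVB_def by (rule pgen_closed)

lemma FVB_inv_gen: "g \<in> fvb_gens n \<Longrightarrow> inv\<^bsub>FVB n\<^esub> (pgen (fvb_rels n) g) = pgen (fvb_rels n) g"
proof -
  assume g: "g \<in> fvb_gens n"
  then have "[(g, True), (g, True)] \<in> fvb_rels n"
    unfolding fvb_gens_def fvb_rels_def sg_def rh_def by blast
  then have "pgen (fvb_rels n) g \<otimes>\<^bsub>FVB n\<^esub> pgen (fvb_rels n) g = \<one>\<^bsub>FVB n\<^esub>"
    unfolding FVB_def pgen_def by (simp add: presented_group_mult pres_class_relator)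
  then show ?thesis
    using group.inv_equality[OF group_FVB _ FVB_gen_closed[OF g] FVB_gen_closed[OF g]] by simp
qed

lemma FVB_induct [consumes 1, case_names one gen]:
  assumes "x \<in> carrier (FVB n)"
    and "P \<one>\<^bsub>FVB n\<^esub>"
    and "\<And>g y. g \<in> fvb_gens n \<Longrightarrow> y \<in> carrier (FVB n) \<Longrightarrow> P y \<Longrightarrow> P (pgen (fvb_rels n) g \<otimes>\<^bsub>FVB n\<^esub> y)"
  shows "P x"
  using assms(1)[unfolded FVB_def]
proof (induction rule: presented_group_induct)
  case one
  then show ?case using assms(2) by (simp add: FVB_def)
next
  case (pos a y)
  then show ?case using assms(3)[of a y] by (simp add: FVB_def)
next
  case (neg a y)
  then show ?case using assms(3)[of a y] FVB_inv_gen[OF neg(1)] by (simp add: FVB_def)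
qed

text \<open>Here \<open>f i\<close> and \<open>g i\<close> stand for the images of \<open>\<sigma>\<^sub>i\<close> and \<open>\<rho>\<^sub>i\<close>. Since automorphisms
  compose on the right, a word acts by applying the maps of its letters from left to right.\<close>

definition satisfies_fvb_relations ::
  "nat \<Rightarrow> 'c set \<Rightarrow> (nat \<Rightarrow> 'c \<Rightarrow> 'c) \<Rightarrow> (nat \<Rightarrow> 'c \<Rightarrow> 'c) \<Rightarrow> bool" where
  "satisfies_fvb_relations n A f g \<longleftrightarrow>
     (\<forall>i j. 1 \<le> i \<longrightarrow> i < n \<longrightarrow> 1 \<le> j \<longrightarrow> j < n \<longrightarrow> (i + 2 \<le> j \<or> j + 2 \<le> i) \<longrightarrow> (\<forall>x\<in>A.
        f j (f i x) = f i (f j x) \<and> g j (g i x) = g i (g j x) \<and> g j (f i x) = f i (g j x))) \<and>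
     (\<forall>i. 1 \<le> i \<longrightarrow> i + 1 < n \<longrightarrow> (\<forall>x\<in>A.
        f i (f (i + 1) (f i x)) = f (i + 1) (f i (f (i + 1) x)) \<and>
        g i (g (i + 1) (g i x)) = g (i + 1) (g i (g (i + 1) x)) \<and>
        f i (g (i + 1) (g i x)) = g (i + 1) (g i (f (i + 1) x)))) \<and>
     (\<forall>i. 1 \<le> i \<longrightarrow> i < n \<longrightarrow> (\<forall>x\<in>A. g i (g i x) = x \<and> f i (f i x) = x))"

lemma eval_positive_word_AutR:
  assumes T: "group T" and f: "f \<in> UNIV \<rightarrow> auto T"
    and pos: "\<forall>l\<in>set u. snd l" and x: "x \<in> carrier T"
  shows "eval_word (AutR T) f u x = fold (\<lambda>l. f (fst l)) u x"
  using pos x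
proof (induction u arbitrary: x)
  case Nil
  then show ?case by (simp add: AutR_one)
next
  case (Cons l u)
  have "f (fst l) x \<in> carrier T" using f Cons.prems by (auto intro: auto_closed)
  then show ?case
    using Cons group.eval_word_closed[OF group_AutR[OF T], of f u] f
    by (cases l) (simp add: AutR_mult_apply)
qed

lemma eval_positive_words_eqI:
  assumes f: "f \<in> UNIV \<rightarrow> auto (presented_group S R)"
    and u: "\<forall>l\<in>set u. snd l" and v: "\<forall>l\<in>set v. snd l"
    and uv: "\<And>a. a \<in> S \<Longrightarrow> fold (\<lambda>l. f (fst l)) u (pgen R a) = fold (\<lambda>l. f (fst l)) v (pgen R a)"
  shows "eval_word (AutR (presented_group S R)) f u = eval_word (AutR (presented_group S R)) f v"
proof (rule auto_presented_group_eqI)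
  have A: "group (AutR (presented_group S R))" by (rule group_AutR[OF group_presented_group])
  show "eval_word (AutR (presented_group S R)) f u \<in> auto (presented_group S R)"
    "eval_word (AutR (presented_group S R)) f v \<in> auto (presented_group S R)"
    using group.eval_word_closed[OF A] f by simp_all
  fix a
  assume "a \<in> S"
  then show "eval_word (AutR (presented_group S R)) f u (pgen R a) =
      eval_word (AutR (presented_group S R)) f v (pgen R a)"
    using uv eval_positive_word_AutR[OF group_presented_group f u pgen_closed]
      eval_positive_word_AutR[OF group_presented_group f v pgen_closed]
    by simp
qed

definition fvb_assignment ::
  "('c, 'm) monoid_scheme \<Rightarrow> nat \<Rightarrow> (nat \<Rightarrow> 'c \<Rightarrow> 'c) \<Rightarrow> (nat \<Rightarrow> 'c \<Rightarrow> 'c) \<Rightarrow> fvb_gen \<Rightarrow> 'c \<Rightarrow> 'c" where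
  "fvb_assignment T n As Ar g = (case g of
      Sig i \<Rightarrow> if 1 \<le> i \<and> i < n then As i else \<one>\<^bsub>AutR T\<^esub>
    | Rho i \<Rightarrow> if 1 \<le> i \<and> i < n then Ar i else \<one>\<^bsub>AutR T\<^esub>)"

context
  fixes S :: "'a set" and R :: "'a word set" and n As Ar
  assumes auto: "\<And>i. 1 \<le> i \<Longrightarrow> i < n \<Longrightarrow> As i \<in> auto (presented_group S R) \<and> Ar i \<in> auto (presented_group S R)"
    and rel: "satisfies_fvb_relations n (pgen R ` S) As Ar"
begin

private abbreviation "assignment \<equiv> fvb_assignment (presented_group S R) n As Ar"

private lemma fvb_assignment_auto: "assignment \<in> UNIV \<rightarrow> carrier (AutR (presented_group S R))"
  using auto group.id_in_auto[OF group_presented_group]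
  by (auto simp: fvb_assignment_def AutR_one split: fvb_gen.split)

lemma eval_fvb_relator:
  assumes "r \<in> fvb_rels n"
  shows "eval_word (AutR (presented_group S R)) assignment r = \<one>\<^bsub>AutR (presented_group S R)\<^esub>"
proof -
  have A: "group (AutR (presented_group S R))" by (rule group_AutR[OF group_presented_group])
  note eval_eq = eval_positive_words_eqI[OF fvb_assignment_auto[simplified]]
  have rel_eq_one: "eval_word (AutR (presented_group S R)) assignment (rel_eq u v) = \<one>\<^bsub>AutR (presented_group S R)\<^esub>"
    if "\<forall>l\<in>set u. snd l" "\<forall>l\<in>set v. snd l"
      "\<And>a. a \<in> S \<Longrightarrow> fold (\<lambda>l. assignment (fst l)) u (pgen R a) = fold (\<lambda>l. assignment (fst l)) v (pgen R a)" for u v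
    by (rule group.eval_word_rel_eq[OF A fvb_assignment_auto eval_eq[OF that]])
  have square_one: "eval_word (AutR (presented_group S R)) assignment [(g, True), (g, True)] = \<one>\<^bsub>AutR (presented_group S R)\<^esub>"
    if "\<And>a. a \<in> S \<Longrightarrow> assignment g (assignment g (pgen R a)) = pgen R a" for g
    using eval_eq[of "[(g, True), (g, True)]" "[]"] that by simp
  note near = rel[unfolded satisfies_fvb_relations_def, THEN conjunct1, rule_format]
    and braid = rel[unfolded satisfies_fvb_relations_def, THEN conjunct2, THEN conjunct1, rule_format,
      unfolded Suc_eq_plus1[symmetric]]
    and square = rel[unfolded satisfies_fvb_relations_def, THEN conjunct2, THEN conjunct2, rule_format]
  from assms consider
    (sg_sg) i j where "r = rel_eq [sg i, sg j] [sg j, sg i]" "1 \<le> i" "i < n" "1 \<le> j" "j < n" "i + 2 \<le> j \<or> j + 2 \<le> i"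
  | (rh_rh) i j where "r = rel_eq [rh i, rh j] [rh j, rh i]" "1 \<le> i" "i < n" "1 \<le> j" "j < n" "i + 2 \<le> j \<or> j + 2 \<le> i"
  | (sg_rh) i j where "r = rel_eq [sg i, rh j] [rh j, sg i]" "1 \<le> i" "i < n" "1 \<le> j" "j < n" "i + 2 \<le> j \<or> j + 2 \<le> i"
  | (sg_braid) i where "r = rel_eq [sg i, sg (i+1), sg i] [sg (i+1), sg i, sg (i+1)]" "1 \<le> i" "i + 1 < n"
  | (rh_braid) i where "r = rel_eq [rh i, rh (i+1), rh i] [rh (i+1), rh i, rh (i+1)]" "1 \<le> i" "i + 1 < n"
  | (mixed) i where "r = rel_eq [rh i, rh (i+1), sg i] [sg (i+1), rh i, rh (i+1)]" "1 \<le> i" "i + 1 < n"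
  | (rh_sq) i where "r = [rh i, rh i]" "1 \<le> i" "i < n"
  | (sg_sq) i where "r = [sg i, sg i]" "1 \<le> i" "i < n"
    unfolding fvb_rels_def by blast
  then show ?thesis
    by cases (simp only: sg_def rh_def; intro rel_eq_one square_one;
        simp add: fvb_assignment_def near braid square)+
qed

lemma fvb_rep_exists:
  "\<exists>h \<in> hom (FVB n) (AutR (presented_group S R)). \<forall>i. 1 \<le> i \<and> i < n \<longrightarrow>
     h (pgen (fvb_rels n) (Sig i)) = As i \<and> h (pgen (fvb_rels n) (Rho i)) = Ar i"
proof
  have A: "group (AutR (presented_group S R))" by (rule group_AutR[OF group_presented_group])
  show "pres_lift (AutR (presented_group S R)) (fvb_rels n) assignment \<in> hom (FVB n) (AutR (presented_group S R))"
    unfolding FVB_def by (rule pres_lift_hom[OF A fvb_assignment_auto eval_fvb_relator])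
  show "\<forall>i. 1 \<le> i \<and> i < n \<longrightarrow> pres_lift (AutR (presented_group S R)) (fvb_rels n) assignment (pgen (fvb_rels n) (Sig i)) = As i \<and>
      pres_lift (AutR (presented_group S R)) (fvb_rels n) assignment (pgen (fvb_rels n) (Rho i)) = Ar i"
    by (simp add: pres_lift_pgen[OF A fvb_assignment_auto eval_fvb_relator] fvb_assignment_def)
qed

end

lemma is_rep_exists:
  assumes ind: "\<And>i. 1 \<le> i \<Longrightarrow> i < n \<Longrightarrow> induces_hom S R S R (sig i) \<and> induces_hom S R S R (rho i)"
    and rel: "satisfies_fvb_relations n (pgen R ` S)
      (\<lambda>i. induced_hom S R S R (sig i)) (\<lambda>i. induced_hom S R S R (rho i))"
  shows "\<exists>h. is_rep n S R sig rho h"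
proof -
  have "induced_hom S R S R (sig i) \<in> auto (presented_group S R) \<and>
      induced_hom S R S R (rho i) \<in> auto (presented_group S R)" if i: "1 \<le> i" "i < n" for i
    using ind[OF i] rel[unfolded satisfies_fvb_relations_def, THEN conjunct2, THEN conjunct2, rule_format, OF i]
    by (simp add: involution_in_auto induced_hom_hom induced_hom_extensional)
  then obtain h where "h \<in> hom (FVB n) (AutR (presented_group S R))"
    "\<forall>i. 1 \<le> i \<and> i < n \<longrightarrow> h (pgen (fvb_rels n) (Sig i)) = induced_hom S R S R (sig i) \<and>
       h (pgen (fvb_rels n) (Rho i)) = induced_hom S R S R (rho i)"
    using fvb_rep_exists[OF _ rel] by blast
  then have "is_rep n S R sig rho h"
    using ind by (simp add: is_rep_def induced_hom_pgen)
  then show ?thesis by blast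
qed

context
  fixes n S R sig rho h
  assumes rep: "is_rep n S R sig rho h"
begin

lemma rep_hom: "h \<in> hom (FVB n) (AutR (presented_group S R))"
  using rep by (simp add: is_rep_def)

lemma rep_auto: "x \<in> carrier (FVB n) \<Longrightarrow> h x \<in> auto (presented_group S R)"
  using hom_in_carrier[OF rep_hom] by fastforce

lemma rep_group_hom: "x \<in> carrier (FVB n) \<Longrightarrow> group_hom (presented_group S R) (presented_group S R) (h x)"
  using rep_auto
  by (simp add: group_hom_def group_hom_axioms_def group_presented_group auto_def)

lemma rep_Sig: "1 \<le> i \<Longrightarrow> i < n \<Longrightarrow> a \<in> S \<Longrightarrow> h (pgen (fvb_rels n) (Sig i)) (pgen R a) = sig i a"
  using rep by (simp add: is_rep_def)

lemma rep_Rho: "1 \<le> i \<Longrightarrow> i < n \<Longrightarrow> a \<in> S \<Longrightarrow> h (pgen (fvb_rels n) (Rho i)) (pgen R a) = rho i a"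
  using rep by (simp add: is_rep_def)

lemma rep_one: "h \<one>\<^bsub>FVB n\<^esub> = (\<lambda>x\<in>carrier (presented_group S R). x)"
  using hom_one[OF rep_hom group_FVB group_AutR[OF group_presented_group]] by (simp add: AutR_one)

lemma rep_mult_apply:
  "x \<in> carrier (FVB n) \<Longrightarrow> y \<in> carrier (FVB n) \<Longrightarrow> t \<in> carrier (presented_group S R) \<Longrightarrow>
   h (x \<otimes>\<^bsub>FVB n\<^esub> y) t = h y (h x t)"
  using hom_mult[OF rep_hom] by (simp add: AutR_mult_apply)

lemma kernel_rep_iff:
  assumes x: "x \<in> carrier (FVB n)"
  shows "x \<in> kernel (FVB n) (AutR (presented_group S R)) h \<longleftrightarrow> (\<forall>a\<in>S. h x (pgen R a) = pgen R a)"
proof -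
  have "h x = (\<lambda>t\<in>carrier (presented_group S R). t) \<longleftrightarrow> (\<forall>a\<in>S. h x (pgen R a) = pgen R a)"
    using auto_presented_group_eqI[OF rep_auto[OF x] group.id_in_auto[OF group_presented_group]]
    by (auto simp: pgen_closed)
  then show ?thesis using x by (simp add: kernel_def AutR_one)
qed

lemma rep_fixes:
  assumes t: "t \<in> carrier (presented_group S R)"
    and fixed: "\<And>g. g \<in> fvb_gens n \<Longrightarrow> h (pgen (fvb_rels n) g) t = t"
    and x: "x \<in> carrier (FVB n)"
  shows "h x t = t"
  using x
proof (induction rule: FVB_induct)
  case one
  then show ?case using t by (simp add: rep_one)
next
  case (gen g y)
  then show ?case using t fixed by (simp add: rep_mult_apply FVB_gen_closed)
qed

end

lemmas rep_simps = rep_Sig rep_Rho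
  group_hom.hom_mult[OF rep_group_hom] group_hom.hom_inv[OF rep_group_hom]
  group_hom.hom_int_pow[OF rep_group_hom] group_hom.hom_one[OF rep_group_hom]
  group_hom.hom_closed[OF rep_group_hom]

lemma rep_intertwine:
  assumes r1: "is_rep n S1 R1 sig1 rho1 h1" and r2: "is_rep n S2 R2 sig2 rho2 h2"
    and s: "s \<in> hom (presented_group S2 R2) (presented_group S1 R1)"
    and on_gens: "\<And>g a. g \<in> fvb_gens n \<Longrightarrow> a \<in> S2 \<Longrightarrow>
      s (h2 (pgen (fvb_rels n) g) (pgen R2 a)) = h1 (pgen (fvb_rels n) g) (s (pgen R2 a))"
    and x: "x \<in> carrier (FVB n)" and t: "t \<in> carrier (presented_group S2 R2)"
  shows "s (h2 x t) = h1 x (s t)"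
  using x t
proof (induction arbitrary: t rule: FVB_induct)
  case one
  then show ?case using s by (simp add: rep_one[OF r1] rep_one[OF r2] hom_in_carrier)
next
  case (gen g y)
  let ?g = "pgen (fvb_rels n) g"
  have g: "?g \<in> carrier (FVB n)" using gen.hyps(1) by (rule FVB_gen_closed)
  have "h1 ?g \<in> hom (presented_group S1 R1) (presented_group S1 R1)"
    and "h2 ?g \<in> hom (presented_group S2 R2) (presented_group S2 R2)"
    using rep_auto[OF r1 g] rep_auto[OF r2 g] by (simp_all add: auto_def)
  then have hom2: "compose (carrier (presented_group S2 R2)) s (h2 ?g) \<in> hom (presented_group S2 R2) (presented_group S1 R1)"
    and hom1: "compose (carrier (presented_group S2 R2)) (h1 ?g) s \<in> hom (presented_group S2 R2) (presented_group S1 R1)"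
    using s by (simp_all add: group.hom_compose[OF group_presented_group])
  have "s (h2 ?g t) = h1 ?g (s t)"
    using presented_group_hom_eqI[OF group_presented_group hom2 hom1 _ gen.prems] gen.hyps(1) gen.prems
    by (simp add: compose_eq pgen_closed on_gens)
  then show ?case
    using gen s rep_auto[OF r2 g]
    by (simp add: rep_mult_apply[OF r1] rep_mult_apply[OF r2] g hom_in_carrier auto_closed)
qed

lemma kernel_subset_by_intertwiner:
  assumes r1: "is_rep n S1 R1 sig1 rho1 h1" and r2: "is_rep n S2 R2 sig2 rho2 h2"
    and s: "s \<in> hom (presented_group S2 R2) (presented_group S1 R1)"
    and on_gens: "\<And>g a. g \<in> fvb_gens n \<Longrightarrow> a \<in> S2 \<Longrightarrow>
      s (h2 (pgen (fvb_rels n) g) (pgen R2 a)) = h1 (pgen (fvb_rels n) g) (s (pgen R2 a))"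
    and det: "\<And>x a. x \<in> carrier (FVB n) \<Longrightarrow> (\<And>b. b \<in> S2 \<Longrightarrow> h1 x (s (pgen R2 b)) = s (pgen R2 b)) \<Longrightarrow>
      a \<in> S1 \<Longrightarrow> h1 x (pgen R1 a) = pgen R1 a"
  shows "kernel (FVB n) (AutR (presented_group S2 R2)) h2 \<subseteq> kernel (FVB n) (AutR (presented_group S1 R1)) h1"
proof
  fix x
  assume xk: "x \<in> kernel (FVB n) (AutR (presented_group S2 R2)) h2"
  then have x: "x \<in> carrier (FVB n)" by (simp add: kernel_def)
  have "h1 x (s (pgen R2 b)) = s (pgen R2 b)" if "b \<in> S2" for b
    using rep_intertwine[OF r1 r2 s on_gens x pgen_closed[OF that]] xk that
    by (simp add: kernel_rep_iff[OF r2 x])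
  then show "x \<in> kernel (FVB n) (AutR (presented_group S1 R1)) h1"
    using det[OF x] by (simp add: kernel_rep_iff[OF r1 x])
qed

lemma kernel_subset_by_injective_intertwiner:
  assumes r1: "is_rep n S1 R1 sig1 rho1 h1" and r2: "is_rep n S2 R2 sig2 rho2 h2"
    and s: "s \<in> hom (presented_group S2 R2) (presented_group S1 R1)"
    and on_gens: "\<And>g a. g \<in> fvb_gens n \<Longrightarrow> a \<in> S2 \<Longrightarrow>
      s (h2 (pgen (fvb_rels n) g) (pgen R2 a)) = h1 (pgen (fvb_rels n) g) (s (pgen R2 a))"
    and inj: "inj_on s (carrier (presented_group S2 R2))"
  shows "kernel (FVB n) (AutR (presented_group S1 R1)) h1 \<subseteq> kernel (FVB n) (AutR (presented_group S2 R2)) h2"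
proof
  fix x
  assume xk: "x \<in> kernel (FVB n) (AutR (presented_group S1 R1)) h1"
  then have x: "x \<in> carrier (FVB n)" and id: "h1 x = (\<lambda>t\<in>carrier (presented_group S1 R1). t)"
    by (simp_all add: kernel_def AutR_one)
  have "h2 x (pgen R2 a) = pgen R2 a" if a: "a \<in> S2" for a
  proof (rule inj_onD[OF inj])
    show "s (h2 x (pgen R2 a)) = s (pgen R2 a)"
      using rep_intertwine[OF r1 r2 s on_gens x pgen_closed[OF a]] id s pgen_closed[OF a]
      by (simp add: hom_in_carrier)
  qed (simp_all add: a pgen_closed group_hom.hom_closed[OF rep_group_hom[OF r2 x]])
  then show "x \<in> kernel (FVB n) (AutR (presented_group S2 R2)) h2"
    by (simp add: kernel_rep_iff[OF r2 x])
qed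


abbreviation fx :: "nat \<Rightarrow> fgen word set" where "fx j \<equiv> pgen {} (Xg j)"
abbreviation fy :: "nat \<Rightarrow> fgen word set" where "fy j \<equiv> pgen {} (Yg j)"
abbreviation fz :: "fgen word set" where "fz \<equiv> pgen {} Zg"
abbreviation kx :: "nat \<Rightarrow> nat \<Rightarrow> fgen word set" where "kx n j \<equiv> pgen (K_rels n) (Xg j)"
abbreviation ky :: "nat \<Rightarrow> nat \<Rightarrow> fgen word set" where "ky n j \<equiv> pgen (K_rels n) (Yg j)"
abbreviation kz :: "nat \<Rightarrow> fgen word set" where "kz n \<equiv> pgen (K_rels n) Zg"

lemma gens2n_simps [simp]:
  "Xg j \<in> gens2n n \<longleftrightarrow> 1 \<le> j \<and> j \<le> n" "Yg j \<in> gens2n n \<longleftrightarrow> 1 \<le> j \<and> j \<le> n" "Zg \<notin> gens2n n"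
  "Xg j \<in> gens2n1 n \<longleftrightarrow> 1 \<le> j \<and> j \<le> n" "Yg j \<in> gens2n1 n \<longleftrightarrow> 1 \<le> j \<and> j \<le> n" "Zg \<in> gens2n1 n"
  by (auto simp: gens2n_def gens2n1_def)

lemma gens2n_cases [consumes 1, case_names X Y]:
  "a \<in> gens2n n \<Longrightarrow> (\<And>j. a = Xg j \<Longrightarrow> 1 \<le> j \<Longrightarrow> j \<le> n \<Longrightarrow> P) \<Longrightarrow>
   (\<And>j. a = Yg j \<Longrightarrow> 1 \<le> j \<Longrightarrow> j \<le> n \<Longrightarrow> P) \<Longrightarrow> P"
  by (auto simp: gens2n_def)

lemma gens2n1_cases [consumes 1, case_names X Y Z]:
  "a \<in> gens2n1 n \<Longrightarrow> (\<And>j. a = Xg j \<Longrightarrow> 1 \<le> j \<Longrightarrow> j \<le> n \<Longrightarrow> P) \<Longrightarrow>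
   (\<And>j. a = Yg j \<Longrightarrow> 1 \<le> j \<Longrightarrow> j \<le> n \<Longrightarrow> P) \<Longrightarrow> (a = Zg \<Longrightarrow> P) \<Longrightarrow> P"
  by (auto simp: gens2n_def gens2n1_def)

context group
begin

lemma inv_cancel_left: "x \<in> carrier G \<Longrightarrow> y \<in> carrier G \<Longrightarrow> x \<otimes> (inv x \<otimes> y) = y"
  by (simp add: m_assoc[symmetric])

lemma cancel_inv_left: "x \<in> carrier G \<Longrightarrow> y \<in> carrier G \<Longrightarrow> inv x \<otimes> (x \<otimes> y) = y"
  by (simp add: m_assoc[symmetric])

lemma int_pow_mult_left:
  "x \<in> carrier G \<Longrightarrow> y \<in> carrier G \<Longrightarrow> x [^] (a::int) \<otimes> (x [^] (b::int) \<otimes> y) = x [^] (a + b) \<otimes> y"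
  by (simp add: int_pow_mult m_assoc)

lemma int_pow_absorb:
  assumes z: "z \<in> carrier G"
  shows "z \<otimes> z [^] (k::int) = z [^] (k + 1)" "inv z \<otimes> z [^] k = z [^] (k - 1)"
    "z [^] k \<otimes> z = z [^] (k + 1)" "z [^] k \<otimes> inv z = z [^] (k - 1)"
proof -
  have "z [^] (1 + k) = z \<otimes> z [^] k" "z [^] (- 1 + k) = inv z \<otimes> z [^] k"
    "z [^] (k + 1) = z [^] k \<otimes> z" "z [^] (k + - 1) = z [^] k \<otimes> inv z"
    using int_pow_mult[OF z, of 1 k] int_pow_mult[OF z, of "- 1" k] int_pow_mult[OF z, of k 1]
      int_pow_mult[OF z, of k "- 1"] z
    by (simp_all add: int_pow_neg)
  then show "z \<otimes> z [^] k = z [^] (k + 1)" "inv z \<otimes> z [^] k = z [^] (k - 1)"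
    "z [^] k \<otimes> z = z [^] (k + 1)" "z [^] k \<otimes> inv z = z [^] (k - 1)"
    by (simp_all add: add.commute)
qed

lemma int_pow_absorb_left:
  assumes z: "z \<in> carrier G" and w: "w \<in> carrier G"
  shows "z \<otimes> (z [^] (k::int) \<otimes> w) = z [^] (k + 1) \<otimes> w" "inv z \<otimes> (z [^] k \<otimes> w) = z [^] (k - 1) \<otimes> w"
    "z [^] k \<otimes> (z \<otimes> w) = z [^] (k + 1) \<otimes> w" "z [^] k \<otimes> (inv z \<otimes> w) = z [^] (k - 1) \<otimes> w"
  using int_pow_absorb[OF z] z w by (simp_all flip: m_assoc)

lemma commute_inv:
  assumes a: "a \<in> carrier G" and b: "b \<in> carrier G" and ab: "a \<otimes> b = b \<otimes> a"
  shows "inv a \<otimes> b = b \<otimes> inv a"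
proof -
  have "inv a \<otimes> b = inv a \<otimes> (b \<otimes> a) \<otimes> inv a" using a b by (simp add: m_assoc)
  also have "\<dots> = inv a \<otimes> (a \<otimes> b) \<otimes> inv a" by (simp add: ab)
  also have "\<dots> = b \<otimes> inv a" using a b by (simp add: m_assoc[symmetric])
  finally show ?thesis .
qed

lemma commute_int_pow:
  assumes a: "a \<in> carrier G" and b: "b \<in> carrier G" and ab: "a \<otimes> b = b \<otimes> a"
  shows "a [^] (k::int) \<otimes> b = b \<otimes> a [^] k"
proof (cases k rule: int_cases2)
  case (nonneg m)
  then show ?thesis using group_commutes_pow[OF ab a b] by (simp add: int_pow_int)
next
  case (nonpos m)
  then show ?thesis
    using commute_inv[OF nat_pow_closed[OF a] b group_commutes_pow[OF ab a b]]
    by (simp add: int_pow_neg_int a)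
qed

lemma commute_left:
  "a \<in> carrier G \<Longrightarrow> b \<in> carrier G \<Longrightarrow> w \<in> carrier G \<Longrightarrow> a \<otimes> b = b \<otimes> a \<Longrightarrow>
   a \<otimes> (b \<otimes> w) = b \<otimes> (a \<otimes> w)"
  by (metis m_assoc)

lemma hom_fixed_right_cancel:
  assumes f: "f \<in> hom G G" and u: "u \<in> carrier G" and c: "c \<in> carrier G"
    and fc: "f c = c" and fuc: "f (u \<otimes> c) = u \<otimes> c"
  shows "f u = u"
  using fuc by (simp add: hom_mult[OF f u c] fc hom_in_carrier[OF f u] u c)

lemma hom_fixed_conj_cancel:
  assumes f: "f \<in> hom G G" and u: "u \<in> carrier G" and c: "c \<in> carrier G"
    and fc: "f c = c" and fuc: "f (conjg G u c) = conjg G u c"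
  shows "f u = u"
proof -
  interpret group_hom G G f using f by (simp add: group_hom_def group_hom_axioms_def is_group)
  show ?thesis using fuc u c by (simp add: conjg_def fc m_assoc)
qed

end

lemmas presented_group_simps =
  monoid.m_assoc[OF group.is_monoid[OF group_presented_group]]
  group.l_inv[OF group_presented_group] group.r_inv[OF group_presented_group]
  group.inv_cancel_left[OF group_presented_group] group.cancel_inv_left[OF group_presented_group]
  group.inv_inv[OF group_presented_group] group.inv_mult_group[OF group_presented_group]
  monoid.inv_one[OF group.is_monoid[OF group_presented_group]]
  monoid.l_one[OF group.is_monoid[OF group_presented_group]]
  monoid.r_one[OF group.is_monoid[OF group_presented_group]]
  group.int_pow_mult_left[OF group_presented_group] group.int_pow_mult[OF group_presented_group, symmetric]
  group.int_pow_neg[OF group_presented_group] int_pow_0 group.int_pow_1[OF group_presented_group]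
  group.int_pow_absorb[OF group_presented_group] group.int_pow_absorb_left[OF group_presented_group]

lemma K_yz_commute: "1 \<le> j \<Longrightarrow> j \<le> n \<Longrightarrow> ky n j \<otimes>\<^bsub>Kgrp n\<^esub> kz n = kz n \<otimes>\<^bsub>Kgrp n\<^esub> ky n j"
  unfolding pgen_def presented_group_mult by (rule pres_class_rel_eq) (auto simp: K_rels_def)

text \<open>Oriented as rewrite rules moving powers of \<open>z\<close> to the right of the \<open>y\<^sub>j\<close>.\<close>

lemma K_commute:
  assumes j: "1 \<le> j" "j \<le> n"
  shows "kz n [^]\<^bsub>Kgrp n\<^esub> (k::int) \<otimes>\<^bsub>Kgrp n\<^esub> ky n j = ky n j \<otimes>\<^bsub>Kgrp n\<^esub> kz n [^]\<^bsub>Kgrp n\<^esub> k"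
    "kz n [^]\<^bsub>Kgrp n\<^esub> k \<otimes>\<^bsub>Kgrp n\<^esub> inv\<^bsub>Kgrp n\<^esub> ky n j = inv\<^bsub>Kgrp n\<^esub> ky n j \<otimes>\<^bsub>Kgrp n\<^esub> kz n [^]\<^bsub>Kgrp n\<^esub> k"
    "kz n \<otimes>\<^bsub>Kgrp n\<^esub> ky n j = ky n j \<otimes>\<^bsub>Kgrp n\<^esub> kz n"
    "kz n \<otimes>\<^bsub>Kgrp n\<^esub> inv\<^bsub>Kgrp n\<^esub> ky n j = inv\<^bsub>Kgrp n\<^esub> ky n j \<otimes>\<^bsub>Kgrp n\<^esub> kz n"
    "inv\<^bsub>Kgrp n\<^esub> kz n \<otimes>\<^bsub>Kgrp n\<^esub> ky n j = ky n j \<otimes>\<^bsub>Kgrp n\<^esub> inv\<^bsub>Kgrp n\<^esub> kz n"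
    "inv\<^bsub>Kgrp n\<^esub> kz n \<otimes>\<^bsub>Kgrp n\<^esub> inv\<^bsub>Kgrp n\<^esub> ky n j = inv\<^bsub>Kgrp n\<^esub> ky n j \<otimes>\<^bsub>Kgrp n\<^esub> inv\<^bsub>Kgrp n\<^esub> kz n"
proof -
  interpret K: group "Kgrp n" by (rule group_presented_group)
  have y: "ky n j \<in> carrier (Kgrp n)" and z: "kz n \<in> carrier (Kgrp n)"
    using j by (simp_all add: pgen_closed)
  have zy: "kz n \<otimes>\<^bsub>Kgrp n\<^esub> ky n j = ky n j \<otimes>\<^bsub>Kgrp n\<^esub> kz n"
    using K_yz_commute[OF j] by simp
  have yz': "inv\<^bsub>Kgrp n\<^esub> ky n j \<otimes>\<^bsub>Kgrp n\<^esub> kz n = kz n \<otimes>\<^bsub>Kgrp n\<^esub> inv\<^bsub>Kgrp n\<^esub> ky n j"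
    by (rule K.commute_inv[OF y z zy[symmetric]])
  show zy': "kz n [^]\<^bsub>Kgrp n\<^esub> k \<otimes>\<^bsub>Kgrp n\<^esub> ky n j = ky n j \<otimes>\<^bsub>Kgrp n\<^esub> kz n [^]\<^bsub>Kgrp n\<^esub> k"
    for k :: int by (rule K.commute_int_pow[OF z y zy])
  show zyi: "kz n [^]\<^bsub>Kgrp n\<^esub> k \<otimes>\<^bsub>Kgrp n\<^esub> inv\<^bsub>Kgrp n\<^esub> ky n j = inv\<^bsub>Kgrp n\<^esub> ky n j \<otimes>\<^bsub>Kgrp n\<^esub> kz n [^]\<^bsub>Kgrp n\<^esub> k"
    for k :: int by (rule K.commute_int_pow[OF z K.inv_closed[OF y] yz'[symmetric]])
  show "kz n \<otimes>\<^bsub>Kgrp n\<^esub> ky n j = ky n j \<otimes>\<^bsub>Kgrp n\<^esub> kz n"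
    "kz n \<otimes>\<^bsub>Kgrp n\<^esub> inv\<^bsub>Kgrp n\<^esub> ky n j = inv\<^bsub>Kgrp n\<^esub> ky n j \<otimes>\<^bsub>Kgrp n\<^esub> kz n"
    "inv\<^bsub>Kgrp n\<^esub> kz n \<otimes>\<^bsub>Kgrp n\<^esub> ky n j = ky n j \<otimes>\<^bsub>Kgrp n\<^esub> inv\<^bsub>Kgrp n\<^esub> kz n"
    "inv\<^bsub>Kgrp n\<^esub> kz n \<otimes>\<^bsub>Kgrp n\<^esub> inv\<^bsub>Kgrp n\<^esub> ky n j = inv\<^bsub>Kgrp n\<^esub> ky n j \<otimes>\<^bsub>Kgrp n\<^esub> inv\<^bsub>Kgrp n\<^esub> kz n"
    using zy'[of 1] zyi[of 1] zy'[of "-1"] zyi[of "-1"] z by (simp_all add: K.int_pow_neg)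
qed

lemma K_commute_left:
  assumes j: "1 \<le> j" "j \<le> n" and w: "w \<in> carrier (Kgrp n)"
  shows "kz n [^]\<^bsub>Kgrp n\<^esub> (k::int) \<otimes>\<^bsub>Kgrp n\<^esub> (ky n j \<otimes>\<^bsub>Kgrp n\<^esub> w) = ky n j \<otimes>\<^bsub>Kgrp n\<^esub> (kz n [^]\<^bsub>Kgrp n\<^esub> k \<otimes>\<^bsub>Kgrp n\<^esub> w)"
    "kz n [^]\<^bsub>Kgrp n\<^esub> k \<otimes>\<^bsub>Kgrp n\<^esub> (inv\<^bsub>Kgrp n\<^esub> ky n j \<otimes>\<^bsub>Kgrp n\<^esub> w) = inv\<^bsub>Kgrp n\<^esub> ky n j \<otimes>\<^bsub>Kgrp n\<^esub> (kz n [^]\<^bsub>Kgrp n\<^esub> k \<otimes>\<^bsub>Kgrp n\<^esub> w)"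
    "kz n \<otimes>\<^bsub>Kgrp n\<^esub> (ky n j \<otimes>\<^bsub>Kgrp n\<^esub> w) = ky n j \<otimes>\<^bsub>Kgrp n\<^esub> (kz n \<otimes>\<^bsub>Kgrp n\<^esub> w)"
    "kz n \<otimes>\<^bsub>Kgrp n\<^esub> (inv\<^bsub>Kgrp n\<^esub> ky n j \<otimes>\<^bsub>Kgrp n\<^esub> w) = inv\<^bsub>Kgrp n\<^esub> ky n j \<otimes>\<^bsub>Kgrp n\<^esub> (kz n \<otimes>\<^bsub>Kgrp n\<^esub> w)"
    "inv\<^bsub>Kgrp n\<^esub> kz n \<otimes>\<^bsub>Kgrp n\<^esub> (ky n j \<otimes>\<^bsub>Kgrp n\<^esub> w) = ky n j \<otimes>\<^bsub>Kgrp n\<^esub> (inv\<^bsub>Kgrp n\<^esub> kz n \<otimes>\<^bsub>Kgrp n\<^esub> w)"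
    "inv\<^bsub>Kgrp n\<^esub> kz n \<otimes>\<^bsub>Kgrp n\<^esub> (inv\<^bsub>Kgrp n\<^esub> ky n j \<otimes>\<^bsub>Kgrp n\<^esub> w) = inv\<^bsub>Kgrp n\<^esub> ky n j \<otimes>\<^bsub>Kgrp n\<^esub> (inv\<^bsub>Kgrp n\<^esub> kz n \<otimes>\<^bsub>Kgrp n\<^esub> w)"
  using K_commute[OF j] j w
  by (simp_all add: group.commute_left[OF group_presented_group] pgen_closed presented_group_closed)

lemma induces_hom_K:
  assumes \<phi>: "\<And>a. a \<in> gens2n1 n \<Longrightarrow> \<phi> a \<in> carrier (presented_group S' R')"
    and yz: "\<And>j. 1 \<le> j \<Longrightarrow> j \<le> n \<Longrightarrow>
      \<phi> (Yg j) \<otimes>\<^bsub>presented_group S' R'\<^esub> \<phi> Zg = \<phi> Zg \<otimes>\<^bsub>presented_group S' R'\<^esub> \<phi> (Yg j)"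
  shows "induces_hom (gens2n1 n) (K_rels n) S' R' \<phi>"
proof -
  let ?G = "presented_group S' R'"
  let ?f = "\<lambda>a. if a \<in> gens2n1 n then \<phi> a else \<one>\<^bsub>?G\<^esub>"
  have f: "?f \<in> UNIV \<rightarrow> carrier ?G" using \<phi> presented_group_closed by auto
  have "eval_word ?G ?f r = \<one>\<^bsub>?G\<^esub>" if rK: "r \<in> K_rels n" for r
  proof -
    obtain j where r: "r = rel_eq [(Yg j, True), (Zg, True)] [(Zg, True), (Yg j, True)]" "1 \<le> j" "j \<le> n"
      using rK by (auto simp: K_rels_def)
    show ?thesis unfolding r(1)
      by (rule group.eval_word_rel_eq[OF group_presented_group f]) (use r \<phi> yz in \<open>simp add: presented_group_simps\<close>)
  qed
  then show ?thesis using \<phi> by (simp add: induces_hom_def)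
qed


section \<open>Existence of the representations\<close>

lemma theta1_induces:
  "1 \<le> i \<Longrightarrow> i < n \<Longrightarrow> induces_hom (gens2n n) {} (gens2n n) {} (theta1_sig n m i)"
  "1 \<le> i \<Longrightarrow> i < n \<Longrightarrow> induces_hom (gens2n n) {} (gens2n n) {} (theta1_rho n m i)"
  by (auto intro!: induces_hom_free elim!: gens2n_cases
      simp: theta1_sig_def theta1_rho_def swap_xy_def Let_def pgen_closed presented_group_closed)

lemma theta1_is_rep: "\<exists>h. is_rep n (gens2n n) {} (theta1_sig n m) (theta1_rho n m) h"
proof (rule is_rep_exists)
  show "induces_hom (gens2n n) {} (gens2n n) {} (theta1_sig n m i) \<and>
      induces_hom (gens2n n) {} (gens2n n) {} (theta1_rho n m i)" if "1 \<le> i" "i < n" for i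
    using theta1_induces that by blast
  show "satisfies_fvb_relations n (pgen {} ` gens2n n)
      (\<lambda>i. induced_hom (gens2n n) {} (gens2n n) {} (theta1_sig n m i))
      (\<lambda>i. induced_hom (gens2n n) {} (gens2n n) {} (theta1_rho n m i))"
    unfolding satisfies_fvb_relations_def
    by (auto elim!: gens2n_cases simp: induced_hom_simps theta1_induces presented_group_simps
        pgen_closed presented_group_closed theta1_sig_def theta1_rho_def swap_xy_def Let_def)
qed

lemma theta2_induces:
  "1 \<le> i \<Longrightarrow> i < n \<Longrightarrow> induces_hom (gens2n1 n) {} (gens2n1 n) {} (theta2_sig n i)"
  "1 \<le> i \<Longrightarrow> i < n \<Longrightarrow> induces_hom (gens2n1 n) {} (gens2n1 n) {} (theta2_rho n i)"
  by (auto intro!: induces_hom_free elim!: gens2n1_cases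
      simp: theta2_sig_def theta2_rho_def swap_xy_def Let_def conjg_def pgen_closed presented_group_closed)

lemma theta2_is_rep: "\<exists>h. is_rep n (gens2n1 n) {} (theta2_sig n) (theta2_rho n) h"
proof (rule is_rep_exists)
  show "induces_hom (gens2n1 n) {} (gens2n1 n) {} (theta2_sig n i) \<and>
      induces_hom (gens2n1 n) {} (gens2n1 n) {} (theta2_rho n i)" if "1 \<le> i" "i < n" for i
    using theta2_induces that by blast
  show "satisfies_fvb_relations n (pgen {} ` gens2n1 n)
      (\<lambda>i. induced_hom (gens2n1 n) {} (gens2n1 n) {} (theta2_sig n i))
      (\<lambda>i. induced_hom (gens2n1 n) {} (gens2n1 n) {} (theta2_rho n i))"
    unfolding satisfies_fvb_relations_def
    by (auto elim!: gens2n1_cases simp: induced_hom_simps theta2_induces presented_group_simps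
        pgen_closed presented_group_closed theta2_sig_def theta2_rho_def swap_xy_def Let_def conjg_def)
qed

lemma theta3_induces:
  "1 \<le> i \<Longrightarrow> i < n \<Longrightarrow> induces_hom (gens2n1 n) (K_rels n) (gens2n1 n) (K_rels n) (theta3_sig n i)"
  "1 \<le> i \<Longrightarrow> i < n \<Longrightarrow> induces_hom (gens2n1 n) (K_rels n) (gens2n1 n) (K_rels n) (theta3_rho n i)"
  by (rule induces_hom_K; auto elim!: gens2n1_cases simp: theta3_sig_def theta3_rho_def swap_xy_def Let_def
      pgen_closed presented_group_closed K_yz_commute)+

lemma theta3_is_rep: "\<exists>h. is_rep n (gens2n1 n) (K_rels n) (theta3_sig n) (theta3_rho n) h"
proof (rule is_rep_exists)
  show "induces_hom (gens2n1 n) (K_rels n) (gens2n1 n) (K_rels n) (theta3_sig n i) \<and>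
      induces_hom (gens2n1 n) (K_rels n) (gens2n1 n) (K_rels n) (theta3_rho n i)" if "1 \<le> i" "i < n" for i
    using theta3_induces that by blast
  show "satisfies_fvb_relations n (pgen (K_rels n) ` gens2n1 n)
      (\<lambda>i. induced_hom (gens2n1 n) (K_rels n) (gens2n1 n) (K_rels n) (theta3_sig n i))
      (\<lambda>i. induced_hom (gens2n1 n) (K_rels n) (gens2n1 n) (K_rels n) (theta3_rho n i))"
    unfolding satisfies_fvb_relations_def
    by (auto elim!: gens2n1_cases simp: induced_hom_simps theta3_induces presented_group_simps K_commute K_commute_left
        pgen_closed presented_group_closed theta3_sig_def theta3_rho_def swap_xy_def Let_def)
qed

lemma theta4_induces:
  "1 \<le> i \<Longrightarrow> i < n \<Longrightarrow> induces_hom (gens2n1 n) (K_rels n) (gens2n1 n) (K_rels n) (theta4_sig n i)"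
  "1 \<le> i \<Longrightarrow> i < n \<Longrightarrow> induces_hom (gens2n1 n) (K_rels n) (gens2n1 n) (K_rels n) (theta4_rho n i)"
  by (rule induces_hom_K; auto elim!: gens2n1_cases simp: theta4_sig_def theta3_sig_def theta4_rho_def
      swap_xy_def Let_def conjg_def pgen_closed presented_group_closed K_yz_commute)+

lemma theta4_is_rep: "\<exists>h. is_rep n (gens2n1 n) (K_rels n) (theta4_sig n) (theta4_rho n) h"
proof (rule is_rep_exists)
  show "induces_hom (gens2n1 n) (K_rels n) (gens2n1 n) (K_rels n) (theta4_sig n i) \<and>
      induces_hom (gens2n1 n) (K_rels n) (gens2n1 n) (K_rels n) (theta4_rho n i)" if "1 \<le> i" "i < n" for i
    using theta4_induces that by blast
  show "satisfies_fvb_relations n (pgen (K_rels n) ` gens2n1 n)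
      (\<lambda>i. induced_hom (gens2n1 n) (K_rels n) (gens2n1 n) (K_rels n) (theta4_sig n i))
      (\<lambda>i. induced_hom (gens2n1 n) (K_rels n) (gens2n1 n) (K_rels n) (theta4_rho n i))"
    unfolding satisfies_fvb_relations_def
    by (auto elim!: gens2n1_cases simp: induced_hom_simps theta4_induces presented_group_simps K_commute K_commute_left
        pgen_closed presented_group_closed theta4_sig_def theta3_sig_def theta4_rho_def swap_xy_def
        Let_def conjg_def)
qed


section \<open>The kernels of \<open>\<theta>\<^sub>2\<close> and \<open>\<theta>\<^sub>3\<close>\<close>

definition z_to_one :: "nat \<Rightarrow> fgen \<Rightarrow> fgen word set" where
  "z_to_one n a = (if a = Zg then \<one>\<^bsub>F2n n\<^esub> else pgen {} a)"

lemma induces_z_to_one: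
  "induces_hom (gens2n1 n) {} (gens2n n) {} (z_to_one n)"
  "induces_hom (gens2n1 n) (K_rels n) (gens2n n) {} (z_to_one n)"
  by (auto intro!: induces_hom_free induces_hom_K elim!: gens2n1_cases
      simp: z_to_one_def pgen_closed presented_group_closed presented_group_simps)

lemma kernel_subset_theta_kernel:
  assumes r: "is_rep n (gens2n n) {} (theta_sig n) (theta_rho n) h"
    and r': "is_rep n (gens2n1 n) R sig rho h'"
    and q: "induces_hom (gens2n1 n) R (gens2n n) {} (z_to_one n)"
    and sig: "\<And>i a. 1 \<le> i \<Longrightarrow> i < n \<Longrightarrow> a \<in> gens2n1 n \<Longrightarrow>
      induced_hom (gens2n1 n) R (gens2n n) {} (z_to_one n) (sig i a) =
        (if a = Zg then \<one>\<^bsub>F2n n\<^esub> else theta_sig n i a)"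
    and rho: "\<And>i a. 1 \<le> i \<Longrightarrow> i < n \<Longrightarrow> a \<in> gens2n1 n \<Longrightarrow>
      induced_hom (gens2n1 n) R (gens2n n) {} (z_to_one n) (rho i a) =
        (if a = Zg then \<one>\<^bsub>F2n n\<^esub> else theta_rho n i a)"
  shows "kernel (FVB n) (AutR (presented_group (gens2n1 n) R)) h' \<subseteq> kernel (FVB n) (AutR (F2n n)) h"
proof (rule kernel_subset_by_intertwiner[OF r r' induced_hom_hom[OF q]])
  have q_gen: "induced_hom (gens2n1 n) R (gens2n n) {} (z_to_one n) (pgen R a) =
      (if a = Zg then \<one>\<^bsub>F2n n\<^esub> else pgen {} a)" if "a \<in> gens2n1 n" for a
    using that by (simp add: induced_hom_pgen[OF q] z_to_one_def presented_group_one)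
  fix g a
  assume "g \<in> fvb_gens n" and a: "a \<in> gens2n1 n"
  then show "induced_hom (gens2n1 n) R (gens2n n) {} (z_to_one n) (h' (pgen (fvb_rels n) g) (pgen R a)) =
      h (pgen (fvb_rels n) g) (induced_hom (gens2n1 n) R (gens2n n) {} (z_to_one n) (pgen R a))"
    by (cases rule: fvb_gens_cases)
       (use a in \<open>auto simp: q_gen sig rho rep_simps[OF r] rep_simps[OF r'] FVB_gen_closed elim!: gens2n1_cases\<close>)
next
  fix x a
  assume fixed: "\<And>b. b \<in> gens2n1 n \<Longrightarrow>
      h x (induced_hom (gens2n1 n) R (gens2n n) {} (z_to_one n) (pgen R b)) =
      induced_hom (gens2n1 n) R (gens2n n) {} (z_to_one n) (pgen R b)"
    and a: "a \<in> gens2n n"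
  then have "a \<in> gens2n1 n" "a \<noteq> Zg" by (auto simp: gens2n1_def gens2n_def)
  then show "h x (pgen {} a) = pgen {} a"
    using fixed[of a] by (simp add: induced_hom_pgen[OF q] z_to_one_def)
qed

definition theta2_intertwiner :: "nat \<Rightarrow> fgen \<Rightarrow> fgen word set" where
  "theta2_intertwiner n a = (case a of Yg j \<Rightarrow> conjg (F2n1 n) (fy j) fz | _ \<Rightarrow> pgen {} a)"

lemma induces_theta2_intertwiner: "induces_hom (gens2n n) {} (gens2n1 n) {} (theta2_intertwiner n)"
  by (auto intro!: induces_hom_free elim!: gens2n_cases
      simp: theta2_intertwiner_def conjg_def pgen_closed presented_group_closed)

lemma theta2_fixes_z:
  "is_rep n (gens2n1 n) {} (theta2_sig n) (theta2_rho n) h2 \<Longrightarrow> x \<in> carrier (FVB n) \<Longrightarrow> h2 x fz = fz"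
  by (rule rep_fixes)
     (auto elim!: fvb_gens_cases simp: pgen_closed rep_simps theta2_sig_def theta2_rho_def swap_xy_def Let_def)

lemma theta2_kernel_subset:
  assumes r2: "is_rep n (gens2n1 n) {} (theta2_sig n) (theta2_rho n) h2"
    and r: "is_rep n (gens2n n) {} (theta_sig n) (theta_rho n) h"
  shows "kernel (FVB n) (AutR (F2n1 n)) h2 \<subseteq> kernel (FVB n) (AutR (F2n n)) h"
  by (rule kernel_subset_theta_kernel[OF r r2 induces_z_to_one(1)])
     (auto elim!: gens2n1_cases simp: induced_hom_simps[OF induces_z_to_one(1)] z_to_one_def
       theta_sig_def theta_rho_def theta2_sig_def theta2_rho_def swap_xy_def Let_def conjg_def
       pgen_closed presented_group_closed presented_group_simps)

lemma theta_kernel_subset_theta2: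
  assumes r2: "is_rep n (gens2n1 n) {} (theta2_sig n) (theta2_rho n) h2"
    and r: "is_rep n (gens2n n) {} (theta_sig n) (theta_rho n) h"
  shows "kernel (FVB n) (AutR (F2n n)) h \<subseteq> kernel (FVB n) (AutR (F2n1 n)) h2"
proof (rule kernel_subset_by_intertwiner[OF r2 r induced_hom_hom[OF induces_theta2_intertwiner]])
  let ?s = "induced_hom (gens2n n) {} (gens2n1 n) {} (theta2_intertwiner n)"
  fix g a
  assume "g \<in> fvb_gens n" and a: "a \<in> gens2n n"
  then show "?s (h (pgen (fvb_rels n) g) (pgen {} a)) = h2 (pgen (fvb_rels n) g) (?s (pgen {} a))"
    by (cases rule: fvb_gens_cases)
       (use a in \<open>auto elim!: gens2n_cases simp: induced_hom_simps[OF induces_theta2_intertwiner]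
         rep_simps[OF r] rep_simps[OF r2] FVB_gen_closed theta2_intertwiner_def
         theta_sig_def theta_rho_def theta2_sig_def theta2_rho_def swap_xy_def Let_def conjg_def
         pgen_closed presented_group_closed presented_group_simps\<close>)
next
  fix x a
  assume x: "x \<in> carrier (FVB n)"
    and fixed: "\<And>b. b \<in> gens2n n \<Longrightarrow>
      h2 x (induced_hom (gens2n n) {} (gens2n1 n) {} (theta2_intertwiner n) (pgen {} b)) =
      induced_hom (gens2n n) {} (gens2n1 n) {} (theta2_intertwiner n) (pgen {} b)"
  have hom: "h2 x \<in> hom (F2n1 n) (F2n1 n)" using rep_auto[OF r2 x] by (simp add: auto_def)
  have z: "h2 x fz = fz" by (rule theta2_fixes_z[OF r2 x])
  assume "a \<in> gens2n1 n"
  then show "h2 x (pgen {} a) = pgen {} a"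
  proof (cases rule: gens2n1_cases)
    case (X j)
    then show ?thesis
      using fixed[of a] by (simp add: induced_hom_pgen[OF induces_theta2_intertwiner] theta2_intertwiner_def)
  next
    case (Y j)
    have fixed_y: "h2 x (conjg (F2n1 n) (fy j) fz) = conjg (F2n1 n) (fy j) fz"
      using fixed[of "Yg j"] Y
      by (simp add: induced_hom_pgen[OF induces_theta2_intertwiner] theta2_intertwiner_def)
    have "fy j \<in> carrier (F2n1 n)" using Y by (simp add: pgen_closed)
    from group.hom_fixed_conj_cancel[OF group_presented_group hom this pgen_closed z fixed_y]
    show ?thesis unfolding Y(1) by simp
  qed (simp add: z)
qed

lemma theta2_kernel:
  "is_rep n (gens2n1 n) {} (theta2_sig n) (theta2_rho n) h2 \<Longrightarrow>
   is_rep n (gens2n n) {} (theta_sig n) (theta_rho n) h \<Longrightarrow>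
   kernel (FVB n) (AutR (F2n1 n)) h2 = kernel (FVB n) (AutR (F2n n)) h"
  by (rule equalityI[OF theta2_kernel_subset theta_kernel_subset_theta2])

text \<open>The elements \<open>x\<^sub>j z\<^sup>j\<close> and \<open>y\<^sub>j z\<^sup>-\<^sup>1\<close> of \<open>K\<close> transform under \<open>\<theta>\<^sub>3\<close> exactly as
  \<open>x\<^sub>j\<close> and \<open>y\<^sub>j\<close> do under \<open>\<theta>\<close>.\<close>

definition theta3_intertwiner :: "nat \<Rightarrow> fgen \<Rightarrow> fgen word set" where
  "theta3_intertwiner n a = (case a of
      Xg j \<Rightarrow> kx n j \<otimes>\<^bsub>Kgrp n\<^esub> kz n [^]\<^bsub>Kgrp n\<^esub> int j
    | Yg j \<Rightarrow> ky n j \<otimes>\<^bsub>Kgrp n\<^esub> inv\<^bsub>Kgrp n\<^esub> kz n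
    | Zg \<Rightarrow> \<one>\<^bsub>Kgrp n\<^esub>)"

lemma induces_theta3_intertwiner: "induces_hom (gens2n n) {} (gens2n1 n) (K_rels n) (theta3_intertwiner n)"
  by (auto intro!: induces_hom_free elim!: gens2n_cases
      simp: theta3_intertwiner_def pgen_closed presented_group_closed)

lemma theta3_kernel_subset:
  assumes r3: "is_rep n (gens2n1 n) (K_rels n) (theta3_sig n) (theta3_rho n) h3"
    and r: "is_rep n (gens2n n) {} (theta_sig n) (theta_rho n) h"
  shows "kernel (FVB n) (AutR (Kgrp n)) h3 \<subseteq> kernel (FVB n) (AutR (F2n n)) h"
  by (rule kernel_subset_theta_kernel[OF r r3 induces_z_to_one(2)])
     (auto elim!: gens2n1_cases simp: induced_hom_simps[OF induces_z_to_one(2)] z_to_one_def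
       theta_sig_def theta_rho_def theta3_sig_def theta3_rho_def swap_xy_def Let_def
       pgen_closed presented_group_closed presented_group_simps)

lemma theta3_fixes_gens:
  assumes r3: "is_rep n (gens2n1 n) (K_rels n) (theta3_sig n) (theta3_rho n) h3"
    and x: "x \<in> carrier (FVB n)"
    and fixed: "\<And>b. b \<in> gens2n n \<Longrightarrow> h3 x (theta3_intertwiner n b) = theta3_intertwiner n b"
    and a: "a \<in> gens2n1 n"
  shows "h3 x (pgen (K_rels n) a) = pgen (K_rels n) a"
proof -
  have hom: "h3 x \<in> hom (Kgrp n) (Kgrp n)" using rep_auto[OF r3 x] by (simp add: auto_def)
  have zc: "kz n \<in> carrier (Kgrp n)" by (simp add: pgen_closed)
  have z: "h3 x (kz n) = kz n"
    by (rule rep_fixes[OF r3 zc _ x])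
       (auto elim!: fvb_gens_cases simp: rep_simps[OF r3] theta3_sig_def theta3_rho_def swap_xy_def Let_def)
  have zi: "h3 x (inv\<^bsub>Kgrp n\<^esub> kz n) = inv\<^bsub>Kgrp n\<^esub> kz n"
    and zj: "h3 x (kz n [^]\<^bsub>Kgrp n\<^esub> k) = kz n [^]\<^bsub>Kgrp n\<^esub> k" for k :: int
    using x z zc by (simp_all add: rep_simps[OF r3])
  from a show ?thesis
  proof (cases rule: gens2n1_cases)
    case (X j)
    have fixed_x: "h3 x (kx n j \<otimes>\<^bsub>Kgrp n\<^esub> kz n [^]\<^bsub>Kgrp n\<^esub> int j) =
        kx n j \<otimes>\<^bsub>Kgrp n\<^esub> kz n [^]\<^bsub>Kgrp n\<^esub> int j"
      using fixed[of "Xg j"] X by (simp add: theta3_intertwiner_def)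
    have "kx n j \<in> carrier (Kgrp n)" using X by (simp add: pgen_closed)
    from group.hom_fixed_right_cancel[OF group_presented_group hom this
        presented_group_closed(3)[OF zc] zj fixed_x]
    show ?thesis unfolding X(1) .
  next
    case (Y j)
    have fixed_y: "h3 x (ky n j \<otimes>\<^bsub>Kgrp n\<^esub> inv\<^bsub>Kgrp n\<^esub> kz n) = ky n j \<otimes>\<^bsub>Kgrp n\<^esub> inv\<^bsub>Kgrp n\<^esub> kz n"
      using fixed[of "Yg j"] Y by (simp add: theta3_intertwiner_def)
    have "ky n j \<in> carrier (Kgrp n)" using Y by (simp add: pgen_closed)
    from group.hom_fixed_right_cancel[OF group_presented_group hom this
        presented_group_closed(2)[OF zc] zi fixed_y]
    show ?thesis unfolding Y(1) .
  qed (simp add: z)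
qed

lemma theta_kernel_subset_theta3:
  assumes r3: "is_rep n (gens2n1 n) (K_rels n) (theta3_sig n) (theta3_rho n) h3"
    and r: "is_rep n (gens2n n) {} (theta_sig n) (theta_rho n) h"
  shows "kernel (FVB n) (AutR (F2n n)) h \<subseteq> kernel (FVB n) (AutR (Kgrp n)) h3"
proof (rule kernel_subset_by_intertwiner[OF r3 r induced_hom_hom[OF induces_theta3_intertwiner]])
  let ?s = "induced_hom (gens2n n) {} (gens2n1 n) (K_rels n) (theta3_intertwiner n)"
  fix g a
  assume "g \<in> fvb_gens n" and a: "a \<in> gens2n n"
  then show "?s (h (pgen (fvb_rels n) g) (pgen {} a)) = h3 (pgen (fvb_rels n) g) (?s (pgen {} a))"
    by (cases rule: fvb_gens_cases)
       (use a in \<open>auto elim!: gens2n_cases simp: induced_hom_simps[OF induces_theta3_intertwiner]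
         rep_simps[OF r] rep_simps[OF r3] FVB_gen_closed theta3_intertwiner_def
         theta_sig_def theta_rho_def theta3_sig_def theta3_rho_def swap_xy_def Let_def
         pgen_closed presented_group_closed presented_group_simps K_commute K_commute_left add.commute\<close>)
next
  fix x a
  assume "x \<in> carrier (FVB n)" "a \<in> gens2n1 n"
    "\<And>b. b \<in> gens2n n \<Longrightarrow>
      h3 x (induced_hom (gens2n n) {} (gens2n1 n) (K_rels n) (theta3_intertwiner n) (pgen {} b)) =
      induced_hom (gens2n n) {} (gens2n1 n) (K_rels n) (theta3_intertwiner n) (pgen {} b)"
  then show "h3 x (pgen (K_rels n) a) = pgen (K_rels n) a"
    by (intro theta3_fixes_gens[OF r3]) (simp_all add: induced_hom_pgen[OF induces_theta3_intertwiner])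
qed

lemma theta3_kernel:
  "is_rep n (gens2n1 n) (K_rels n) (theta3_sig n) (theta3_rho n) h3 \<Longrightarrow>
   is_rep n (gens2n n) {} (theta_sig n) (theta_rho n) h \<Longrightarrow>
   kernel (FVB n) (AutR (Kgrp n)) h3 = kernel (FVB n) (AutR (F2n n)) h"
  by (rule equalityI[OF theta3_kernel_subset theta_kernel_subset_theta3])


section \<open>The kernel of \<open>\<theta>\<^sub>1\<^sub>,\<^sub>m\<close>\<close>

definition y_exponent :: "int \<Rightarrow> fgen \<Rightarrow> int" where
  "y_exponent m a = (case a of Yg _ \<Rightarrow> m | _ \<Rightarrow> 1)"

lemma theta1_permutes_y:
  assumes r1: "is_rep n (gens2n n) {} (theta1_sig n m) (theta1_rho n m) h1"
    and x: "x \<in> carrier (FVB n)"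
  shows "1 \<le> j \<Longrightarrow> j \<le> n \<Longrightarrow> \<exists>j'. 1 \<le> j' \<and> j' \<le> n \<and> h1 x (fy j) = fy j'"
  using x
proof (induction arbitrary: j rule: FVB_induct)
  case one
  then show ?case by (auto simp: rep_one[OF r1] pgen_closed)
next
  case (gen g y)
  have "\<exists>j1. 1 \<le> j1 \<and> j1 \<le> n \<and> h1 (pgen (fvb_rels n) g) (fy j) = fy j1"
    using gen.hyps(1)
  proof (cases rule: fvb_gens_cases)
    case (Sig i)
    then show ?thesis using gen.prems by (auto simp: rep_Sig[OF r1] theta1_sig_def Let_def)
  next
    case (Rho i)
    then show ?thesis
      using gen.prems
      by (intro exI[of _ "if j = i then i + 1 else if j = i + 1 then i else j"])
         (auto simp: rep_Rho[OF r1] theta1_rho_def swap_xy_def)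
  qed
  then show ?case
    using gen by (auto simp: rep_mult_apply[OF r1] FVB_gen_closed pgen_closed)
qed

lemma power_hom_intertwines_theta1:
  assumes r1: "is_rep n (gens2n n) {} (theta1_sig n m) (theta1_rho n m) h1"
    and r: "is_rep n (gens2n n) {} (theta_sig n) (theta_rho n) h"
    and "g \<in> fvb_gens n" "a \<in> gens2n n"
  shows "power_hom (gens2n n) (y_exponent m) (h (pgen (fvb_rels n) g) (pgen {} a)) =
    h1 (pgen (fvb_rels n) g) (power_hom (gens2n n) (y_exponent m) (pgen {} a))"
  using assms(3,4)
  by (auto elim!: fvb_gens_cases gens2n_cases simp: induced_hom_simps[OF induces_power_hom]
      rep_simps[OF r] rep_simps[OF r1] FVB_gen_closed y_exponent_def
      theta_sig_def theta_rho_def theta1_sig_def theta1_rho_def swap_xy_def Let_def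
      pgen_closed presented_group_closed presented_group_simps)

lemma theta1_kernel_subset:
  assumes m: "m \<noteq> 0"
    and r1: "is_rep n (gens2n n) {} (theta1_sig n m) (theta1_rho n m) h1"
    and r: "is_rep n (gens2n n) {} (theta_sig n) (theta_rho n) h"
  shows "kernel (FVB n) (AutR (F2n n)) h1 \<subseteq> kernel (FVB n) (AutR (F2n n)) h"
  by (rule kernel_subset_by_injective_intertwiner[OF r1 r induced_hom_hom[OF induces_power_hom]
      power_hom_intertwines_theta1[OF r1 r] inj_on_power_hom])
     (use m in \<open>auto simp: y_exponent_def split: fgen.split\<close>)

lemma theta_kernel_subset_theta1:
  assumes m: "m \<noteq> 0"
    and r1: "is_rep n (gens2n n) {} (theta1_sig n m) (theta1_rho n m) h1"
    and r: "is_rep n (gens2n n) {} (theta_sig n) (theta_rho n) h"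
  shows "kernel (FVB n) (AutR (F2n n)) h \<subseteq> kernel (FVB n) (AutR (F2n n)) h1"
proof (rule kernel_subset_by_intertwiner[OF r1 r induced_hom_hom[OF induces_power_hom]
      power_hom_intertwines_theta1[OF r1 r]])
  fix x a
  assume x: "x \<in> carrier (FVB n)"
    and fixed: "\<And>b. b \<in> gens2n n \<Longrightarrow>
      h1 x (power_hom (gens2n n) (y_exponent m) (pgen {} b)) = power_hom (gens2n n) (y_exponent m) (pgen {} b)"
  assume "a \<in> gens2n n"
  then show "h1 x (pgen {} a) = pgen {} a"
  proof (cases rule: gens2n_cases)
    case (X j)
    then show ?thesis
      using fixed[of a]
      by (simp add: induced_hom_pgen[OF induces_power_hom] y_exponent_def pgen_closed presented_group_simps)
  next
    case (Y j)
    obtain j' where j': "1 \<le> j'" "j' \<le> n" "h1 x (fy j) = fy j'"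
      using theta1_permutes_y[OF r1 x] Y by blast
    have "fy j' [^]\<^bsub>F2n n\<^esub> m = fy j [^]\<^bsub>F2n n\<^esub> m"
      using fixed[of a] Y x j'
      by (simp add: induced_hom_pgen[OF induces_power_hom] y_exponent_def rep_simps[OF r1] pgen_closed)
    then have "weight (\<lambda>b. if b = Yg j then 1 else 0) (fy j' [^]\<^bsub>F2n n\<^esub> m) = m"
      using Y by (simp add: weight_simps pgen_closed)
    then have "j' = j" using m j' by (simp add: weight_simps pgen_closed split: if_splits)
    then show ?thesis using Y j' by simp
  qed
qed

lemma theta1_kernel:
  "m \<noteq> 0 \<Longrightarrow> is_rep n (gens2n n) {} (theta1_sig n m) (theta1_rho n m) h1 \<Longrightarrow>
   is_rep n (gens2n n) {} (theta_sig n) (theta_rho n) h \<Longrightarrow>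
   kernel (FVB n) (AutR (F2n n)) h1 = kernel (FVB n) (AutR (F2n n)) h"
  by (rule equalityI[OF theta1_kernel_subset theta_kernel_subset_theta1])


section \<open>The kernel of \<open>\<theta>\<^sub>4\<close>\<close>

definition y_subgroup :: "nat \<Rightarrow> fgen word set set" where
  "y_subgroup n = generate (F2n n) (fy ` {1..n})"

definition F_to_K :: "nat \<Rightarrow> fgen word set \<Rightarrow> fgen word set" where
  "F_to_K n = induced_hom (gens2n n) {} (gens2n1 n) (K_rels n) (pgen (K_rels n))"

definition y_degree :: "fgen word set \<Rightarrow> int" where
  "y_degree = weight (\<lambda>a. case a of Yg _ \<Rightarrow> 1 | _ \<Rightarrow> 0)"

lemma induces_F_to_K: "induces_hom (gens2n n) {} (gens2n1 n) (K_rels n) (pgen (K_rels n))"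
  by (rule induces_hom_free) (auto elim!: gens2n_cases simp: pgen_closed)

lemmas F_to_K_simps = induced_hom_simps[OF induces_F_to_K, folded F_to_K_def]
  induced_hom_closed[OF induces_F_to_K, folded F_to_K_def]

lemma y_subgroup_closed: "U \<in> y_subgroup n \<Longrightarrow> U \<in> carrier (F2n n)"
  unfolding y_subgroup_def
  by (rule group.generate_in_carrier[OF group_presented_group]) (auto simp: pgen_closed)

lemma y_subgroup_intros:
  "\<one>\<^bsub>F2n n\<^esub> \<in> y_subgroup n"
  "1 \<le> j \<Longrightarrow> j \<le> n \<Longrightarrow> fy j \<in> y_subgroup n"
  "1 \<le> j \<Longrightarrow> j \<le> n \<Longrightarrow> inv\<^bsub>F2n n\<^esub> fy j \<in> y_subgroup n"
  "U \<in> y_subgroup n \<Longrightarrow> V \<in> y_subgroup n \<Longrightarrow> U \<otimes>\<^bsub>F2n n\<^esub> V \<in> y_subgroup n"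
  unfolding y_subgroup_def by (auto intro: generate.intros)

lemma y_subgroup_induct [consumes 1, case_names one gen inv mult]:
  assumes "U \<in> y_subgroup n" and "P \<one>\<^bsub>F2n n\<^esub>"
    and "\<And>j. 1 \<le> j \<Longrightarrow> j \<le> n \<Longrightarrow> P (fy j)"
    and "\<And>j. 1 \<le> j \<Longrightarrow> j \<le> n \<Longrightarrow> P (inv\<^bsub>F2n n\<^esub> fy j)"
    and "\<And>U V. U \<in> y_subgroup n \<Longrightarrow> V \<in> y_subgroup n \<Longrightarrow> P U \<Longrightarrow> P V \<Longrightarrow> P (U \<otimes>\<^bsub>F2n n\<^esub> V)"
  shows "P U"
  using assms(1) unfolding y_subgroup_def
  by (induction rule: generate.induct) (use assms(2-5) in \<open>auto simp: y_subgroup_def\<close>)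

lemma F_to_K_commute_z:
  assumes U: "U \<in> y_subgroup n"
  shows "kz n [^]\<^bsub>Kgrp n\<^esub> (k::int) \<otimes>\<^bsub>Kgrp n\<^esub> F_to_K n U = F_to_K n U \<otimes>\<^bsub>Kgrp n\<^esub> kz n [^]\<^bsub>Kgrp n\<^esub> k"
proof -
  interpret K: group "Kgrp n" by (rule group_presented_group)
  have "kz n \<otimes>\<^bsub>Kgrp n\<^esub> F_to_K n U = F_to_K n U \<otimes>\<^bsub>Kgrp n\<^esub> kz n" using U
  proof (induction rule: y_subgroup_induct)
    case (mult U V)
    then show ?case
      using y_subgroup_closed[OF mult.hyps(1)] y_subgroup_closed[OF mult.hyps(2)]
      by (simp add: F_to_K_simps pgen_closed K.m_assoc flip: K.m_assoc[of "kz n"])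
  qed (simp_all add: F_to_K_simps pgen_closed K_commute)
  then show ?thesis
    using U by (simp add: K.commute_int_pow pgen_closed F_to_K_simps y_subgroup_closed)
qed

lemma y_subgroup_image:
  assumes f: "f \<in> hom (F2n n) (F2n n)" and g: "g \<in> hom (Kgrp n) (Kgrp n)"
    and perm: "\<And>j. 1 \<le> j \<Longrightarrow> j \<le> n \<Longrightarrow>
      \<exists>j'. 1 \<le> j' \<and> j' \<le> n \<and> f (fy j) = fy j' \<and> g (ky n j) = ky n j'"
    and U: "U \<in> y_subgroup n"
  shows "f U \<in> y_subgroup n \<and> g (F_to_K n U) = F_to_K n (f U) \<and> y_degree (f U) = y_degree U"
  using U
proof (induction rule: y_subgroup_induct)
  interpret F: group_hom "F2n n" "F2n n" f
    using f by (simp add: group_hom_def group_hom_axioms_def group_presented_group)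
  interpret K: group_hom "Kgrp n" "Kgrp n" g
    using g by (simp add: group_hom_def group_hom_axioms_def group_presented_group)
  {
    case one
    then show ?case by (simp add: y_subgroup_intros F_to_K_simps)
  next
    case (gen j)
    then show ?case
      using perm[OF gen] by (auto simp: y_subgroup_intros F_to_K_simps y_degree_def)
  next
    case (inv j)
    then show ?case
      using perm[OF inv]
      by (auto simp: y_subgroup_intros F_to_K_simps y_degree_def weight_simps pgen_closed)
  next
    case (mult U V)
    then show ?case
      using y_subgroup_closed[OF mult.hyps(1)] y_subgroup_closed[OF mult.hyps(2)]
      by (simp add: y_subgroup_intros F_to_K_simps y_degree_def weight_simps)
  }
qed

lemma x_weight_y_subgroup: "U \<in> y_subgroup n \<Longrightarrow> weight (\<lambda>a. if a = Xg i then 1 else 0) U = 0"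
  by (induction rule: y_subgroup_induct) (auto simp: weight_simps pgen_closed y_subgroup_closed)

lemma (in group) conjg_int_pow_mult:
  assumes x: "x \<in> carrier G" and u: "u \<in> carrier G" and w: "w \<in> carrier G" and z: "z \<in> carrier G"
    and zu: "z [^] (d::int) \<otimes> u = u \<otimes> z [^] d"
  shows "conjg G (conjg G x (z [^] (k::int)) \<otimes> u) (z [^] d) \<otimes> w = conjg G x (z [^] (k + d)) \<otimes> (u \<otimes> w)"
proof -
  have zuw: "z [^] d \<otimes> (u \<otimes> w) = u \<otimes> (z [^] d \<otimes> w)"
    using zu u z w by (simp add: m_assoc[symmetric])
  have "conjg G (conjg G x (z [^] k) \<otimes> u) (z [^] d) \<otimes> w =
      z [^] (- d) \<otimes> (z [^] (- k) \<otimes> (x \<otimes> (z [^] k \<otimes> (u \<otimes> (z [^] d \<otimes> w)))))"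
    using x u w z by (simp add: conjg_def int_pow_neg m_assoc)
  also have "\<dots> = z [^] (- d + - k) \<otimes> (x \<otimes> (z [^] (k + d) \<otimes> (u \<otimes> w)))"
    using x u w z by (simp add: zuw[symmetric] int_pow_mult_left)
  also have "\<dots> = conjg G x (z [^] (k + d)) \<otimes> (u \<otimes> w)"
  proof -
    have "z [^] (- d + - k) = inv (z [^] (k + d))"
      using int_pow_neg[OF z, of "k + d"] by (simp add: algebra_simps)
    then show ?thesis using x u w z by (simp add: conjg_def m_assoc)
  qed
  finally show ?thesis .
qed

text \<open>If \<open>\<theta>(\<beta>)\<close> sends \<open>x\<^sub>i\<close> to \<open>x\<^sub>j U\<close> with \<open>U\<close> a word in the \<open>y\<close>'s, then \<open>\<theta>\<^sub>4(\<beta>)\<close>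
  sends \<open>x\<^sub>i\<close> to \<open>x\<^sub>j\<close> conjugated by \<open>z\<^sup>e\<close>, followed by \<open>U\<close>; the exponent \<open>e\<close> is the index
  shift \<open>j - i\<close> minus the \<open>y\<close>-degree of \<open>U\<close>.\<close>

definition theta4_x_image :: "nat \<Rightarrow> nat \<Rightarrow> nat \<Rightarrow> fgen word set \<Rightarrow> fgen word set" where
  "theta4_x_image n i j U = conjg (Kgrp n) (kx n j) (kz n [^]\<^bsub>Kgrp n\<^esub> (int j - int i - y_degree U))
     \<otimes>\<^bsub>Kgrp n\<^esub> F_to_K n U"

definition theta4_shape ::
  "nat \<Rightarrow> (fgen word set \<Rightarrow> fgen word set) \<Rightarrow> (fgen word set \<Rightarrow> fgen word set) \<Rightarrow> bool" where
  "theta4_shape n f g \<longleftrightarrow>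
     (\<forall>j. 1 \<le> j \<and> j \<le> n \<longrightarrow> (\<exists>j'. 1 \<le> j' \<and> j' \<le> n \<and> f (fy j) = fy j' \<and> g (ky n j) = ky n j')) \<and>
     g (kz n) = kz n \<and>
     (\<forall>i. 1 \<le> i \<and> i \<le> n \<longrightarrow> (\<exists>j U. 1 \<le> j \<and> j \<le> n \<and> U \<in> y_subgroup n \<and>
        f (fx i) = fx j \<otimes>\<^bsub>F2n n\<^esub> U \<and> g (kx n i) = theta4_x_image n i j U))"

lemma theta4_shape_id: "theta4_shape n (\<lambda>t\<in>carrier (F2n n). t) (\<lambda>t\<in>carrier (Kgrp n). t)"
  unfolding theta4_shape_def theta4_x_image_def
  by (auto simp: pgen_closed y_subgroup_intros y_degree_def weight_simps F_to_K_simps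
      presented_group_simps conjg_def intro!: exI[of _ "\<one>\<^bsub>F2n n\<^esub>"])

lemma theta4_x_image_comp:
  assumes f2: "f2 \<in> hom (F2n n) (F2n n)" and g2: "g2 \<in> hom (Kgrp n) (Kgrp n)"
    and s2: "theta4_shape n f2 g2"
    and V: "1 \<le> j1" "j1 \<le> n" "V \<in> y_subgroup n"
      "f1 (fx i) = fx j1 \<otimes>\<^bsub>F2n n\<^esub> V" "g1 (kx n i) = theta4_x_image n i j1 V"
  shows "\<exists>j U. 1 \<le> j \<and> j \<le> n \<and> U \<in> y_subgroup n \<and>
    f2 (f1 (fx i)) = fx j \<otimes>\<^bsub>F2n n\<^esub> U \<and> g2 (g1 (kx n i)) = theta4_x_image n i j U"
proof -
  interpret K: group_hom "Kgrp n" "Kgrp n" g2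
    using g2 by (simp add: group_hom_def group_hom_axioms_def group_presented_group)
  note shape2 = s2[unfolded theta4_shape_def]
  obtain j U where U: "1 \<le> j" "j \<le> n" "U \<in> y_subgroup n" "f2 (fx j1) = fx j \<otimes>\<^bsub>F2n n\<^esub> U"
    "g2 (kx n j1) = theta4_x_image n j1 j U"
    using shape2[THEN conjunct2, THEN conjunct2, rule_format, of j1] V(1,2) by blast
  have V2: "f2 V \<in> y_subgroup n" "g2 (F_to_K n V) = F_to_K n (f2 V)" "y_degree (f2 V) = y_degree V"
    using y_subgroup_image[OF f2 g2 _ V(3)] shape2[THEN conjunct1, rule_format] by simp_all
  note F_closed = y_subgroup_closed[OF V(3)] y_subgroup_closed[OF U(3)] y_subgroup_closed[OF V2(1)]
  note closed = F_closed F_to_K_simps(6)[OF F_closed(1)] F_to_K_simps(6)[OF F_closed(2)]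
    F_to_K_simps(6)[OF F_closed(3)]
  have "f2 (f1 (fx i)) = fx j \<otimes>\<^bsub>F2n n\<^esub> (U \<otimes>\<^bsub>F2n n\<^esub> f2 V)"
    using V(1,2,4) U(1,2,4) closed hom_mult[OF f2] by (simp add: pgen_closed presented_group_simps)
  moreover have "g2 (g1 (kx n i)) = theta4_x_image n i j (U \<otimes>\<^bsub>F2n n\<^esub> f2 V)"
  proof -
    have "g2 (g1 (kx n i)) = conjg (Kgrp n) (g2 (kx n j1)) (kz n [^]\<^bsub>Kgrp n\<^esub> (int j1 - int i - y_degree V))
        \<otimes>\<^bsub>Kgrp n\<^esub> F_to_K n (f2 V)"
      using V(1,2,5) V2(2) shape2 closed
      by (simp add: theta4_x_image_def conjg_def pgen_closed presented_group_closed K.hom_int_pow)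
    also have "\<dots> = conjg (Kgrp n) (kx n j) (kz n [^]\<^bsub>Kgrp n\<^esub>
        ((int j - int j1 - y_degree U) + (int j1 - int i - y_degree V)))
        \<otimes>\<^bsub>Kgrp n\<^esub> (F_to_K n U \<otimes>\<^bsub>Kgrp n\<^esub> F_to_K n (f2 V))"
      unfolding U(5) theta4_x_image_def using U(1,2) closed
      by (intro group.conjg_int_pow_mult[OF group_presented_group] F_to_K_commute_z[OF U(3)])
         (simp_all add: pgen_closed)
    finally show ?thesis
      using closed V2(3) by (simp add: theta4_x_image_def F_to_K_simps y_degree_def weight_simps algebra_simps)
  qed
  ultimately show ?thesis
    using U(1,2,3) V2(1) y_subgroup_intros(4) by blast
qed

lemma theta4_shape_comp:
  assumes f2: "f2 \<in> hom (F2n n) (F2n n)" and g2: "g2 \<in> hom (Kgrp n) (Kgrp n)"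
    and s1: "theta4_shape n f1 g1" and s2: "theta4_shape n f2 g2"
  shows "theta4_shape n (\<lambda>t. f2 (f1 t)) (\<lambda>t. g2 (g1 t))"
proof -
  note shape1 = s1[unfolded theta4_shape_def] and shape2 = s2[unfolded theta4_shape_def]
  have "\<exists>j'. 1 \<le> j' \<and> j' \<le> n \<and> f2 (f1 (fy j)) = fy j' \<and> g2 (g1 (ky n j)) = ky n j'"
    if "1 \<le> j" "j \<le> n" for j
    using shape1[THEN conjunct1, rule_format, OF conjI, OF that]
      shape2[THEN conjunct1, rule_format] by fastforce
  moreover have "g2 (g1 (kz n)) = kz n" using shape1 shape2 by simp
  moreover have "\<exists>j U. 1 \<le> j \<and> j \<le> n \<and> U \<in> y_subgroup n \<and>
      f2 (f1 (fx i)) = fx j \<otimes>\<^bsub>F2n n\<^esub> U \<and> g2 (g1 (kx n i)) = theta4_x_image n i j U"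
    if "1 \<le> i" "i \<le> n" for i
    using shape1[THEN conjunct2, THEN conjunct2, rule_format, OF conjI, OF that]
    by (elim exE conjE) (rule theta4_x_image_comp[OF f2 g2 s2])
  ultimately show ?thesis by (simp add: theta4_shape_def)
qed

context
  fixes n h h4
  assumes r: "is_rep n (gens2n n) {} (theta_sig n) (theta_rho n) h"
    and r4: "is_rep n (gens2n1 n) (K_rels n) (theta4_sig n) (theta4_rho n) h4"
begin

lemma theta4_shape_Sig:
  assumes l: "1 \<le> l" "l < n"
  shows "theta4_shape n (h (pgen (fvb_rels n) (Sig l))) (h4 (pgen (fvb_rels n) (Sig l)))"
proof -
  note simps = rep_simps[OF r] rep_simps[OF r4] FVB_gen_closed theta_sig_def theta4_sig_def
    theta3_sig_def Let_def theta4_x_image_def conjg_def F_to_K_simps y_degree_def weight_simps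
    y_subgroup_intros pgen_closed presented_group_closed presented_group_simps
  have "\<exists>j U. 1 \<le> j \<and> j \<le> n \<and> U \<in> y_subgroup n \<and>
      h (pgen (fvb_rels n) (Sig l)) (fx i) = fx j \<otimes>\<^bsub>F2n n\<^esub> U \<and>
      h4 (pgen (fvb_rels n) (Sig l)) (kx n i) = theta4_x_image n i j U"
    if i: "1 \<le> i" "i \<le> n" for i
  proof -
    consider "i = l" | "i = l + 1" | "i \<noteq> l" "i \<noteq> l + 1" by blast
    then show ?thesis
    proof cases
      case 1
      then show ?thesis using l by (intro exI[of _ "l + 1"] exI[of _ "fy (l + 1)"]) (auto simp: simps)
    next
      case 2
      then show ?thesis
        using l by (intro exI[of _ l] exI[of _ "inv\<^bsub>F2n n\<^esub> fy (l + 1)"]) (auto simp: simps)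
    next
      case 3
      then show ?thesis using i l by (intro exI[of _ i] exI[of _ "\<one>\<^bsub>F2n n\<^esub>"]) (auto simp: simps)
    qed
  qed
  moreover have "h4 (pgen (fvb_rels n) (Sig l)) (kz n) = kz n" using l by (simp add: simps)
  moreover have "h (pgen (fvb_rels n) (Sig l)) (fy j) = fy j"
    "h4 (pgen (fvb_rels n) (Sig l)) (ky n j) = ky n j" if "1 \<le> j" "j \<le> n" for j
    using that l by (simp_all add: simps)
  ultimately show ?thesis unfolding theta4_shape_def by blast
qed

lemma theta4_shape_Rho:
  assumes l: "1 \<le> l" "l < n"
  shows "theta4_shape n (h (pgen (fvb_rels n) (Rho l))) (h4 (pgen (fvb_rels n) (Rho l)))"
proof -
  note simps = rep_simps[OF r] rep_simps[OF r4] FVB_gen_closed theta_rho_def theta4_rho_def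
    swap_xy_def Let_def theta4_x_image_def conjg_def F_to_K_simps y_degree_def weight_simps
    y_subgroup_intros pgen_closed presented_group_closed presented_group_simps
  have "\<exists>j'. 1 \<le> j' \<and> j' \<le> n \<and> h (pgen (fvb_rels n) (Rho l)) (fy j) = fy j' \<and>
      h4 (pgen (fvb_rels n) (Rho l)) (ky n j) = ky n j'" if "1 \<le> j" "j \<le> n" for j
    using that l
    by (intro exI[of _ "if j = l then l + 1 else if j = l + 1 then l else j"]) (auto simp: simps)
  moreover have "\<exists>j U. 1 \<le> j \<and> j \<le> n \<and> U \<in> y_subgroup n \<and>
      h (pgen (fvb_rels n) (Rho l)) (fx i) = fx j \<otimes>\<^bsub>F2n n\<^esub> U \<and>
      h4 (pgen (fvb_rels n) (Rho l)) (kx n i) = theta4_x_image n i j U"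
    if "1 \<le> i" "i \<le> n" for i
    using that l
    by (intro exI[of _ "if i = l then l + 1 else if i = l + 1 then l else i"] exI[of _ "\<one>\<^bsub>F2n n\<^esub>"])
       (auto simp: simps)
  moreover have "h4 (pgen (fvb_rels n) (Rho l)) (kz n) = kz n" using l by (simp add: simps)
  ultimately show ?thesis unfolding theta4_shape_def by blast
qed

lemma theta4_shape_rep: "x \<in> carrier (FVB n) \<Longrightarrow> theta4_shape n (h x) (h4 x)"
proof (induction rule: FVB_induct)
  case one
  then show ?case unfolding rep_one[OF r] rep_one[OF r4] by (rule theta4_shape_id)
next
  case (gen g y)
  have "theta4_shape n (h (pgen (fvb_rels n) g)) (h4 (pgen (fvb_rels n) g))"
    using gen(1) by (cases rule: fvb_gens_cases) (simp_all add: theta4_shape_Sig theta4_shape_Rho)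
  then have "theta4_shape n (\<lambda>t. h y (h (pgen (fvb_rels n) g) t)) (\<lambda>t. h4 y (h4 (pgen (fvb_rels n) g) t))"
    using rep_auto[OF r gen(2)] rep_auto[OF r4 gen(2)]
    by (intro theta4_shape_comp[OF _ _ _ gen(3)]) (simp_all add: auto_def)
  then show ?case
    using gen
    by (simp add: theta4_shape_def rep_mult_apply[OF r] rep_mult_apply[OF r4] FVB_gen_closed pgen_closed)
qed

end

lemma theta4_shape_fixes:
  assumes shape: "theta4_shape n f g"
    and fixed: "\<And>a. a \<in> gens2n n \<Longrightarrow> f (pgen {} a) = pgen {} a"
    and a: "a \<in> gens2n1 n"
  shows "g (pgen (K_rels n) a) = pgen (K_rels n) a"
  using a
proof (cases rule: gens2n1_cases)
  case (X i)
  then obtain j U where U: "1 \<le> j" "j \<le> n" "U \<in> y_subgroup n" "fx i = fx j \<otimes>\<^bsub>F2n n\<^esub> U"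
    "g (kx n i) = theta4_x_image n i j U"
    using shape[unfolded theta4_shape_def, THEN conjunct2, THEN conjunct2, rule_format, of i]
      fixed[of "Xg i"] by auto
  have Uc: "U \<in> carrier (F2n n)" by (rule y_subgroup_closed[OF U(3)])
  have "weight (\<lambda>a. if a = Xg i then 1 else 0) (fx i) =
      weight (\<lambda>a. if a = Xg i then 1 else 0) (fx j \<otimes>\<^bsub>F2n n\<^esub> U)"
    using U(4) by simp
  then have ji: "j = i"
    using Uc U(1,2) x_weight_y_subgroup[OF U(3), of i]
    by (simp add: weight_simps pgen_closed split: if_splits)
  have "fx i \<in> carrier (F2n n)" using X by (simp add: pgen_closed)
  then have "U = \<one>\<^bsub>F2n n\<^esub>"
    using U(4) group.l_cancel_one'[OF group_presented_group _ Uc] unfolding ji by blast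
  then show ?thesis
    using U(5) X ji
    by (simp add: theta4_x_image_def y_degree_def weight_simps F_to_K_simps conjg_def pgen_closed
        presented_group_simps)
next
  case (Y j)
  then obtain j' where "1 \<le> j'" "j' \<le> n" "f (fy j) = fy j'" "g (ky n j) = ky n j'"
    using shape[unfolded theta4_shape_def, THEN conjunct1, rule_format, of j] by auto
  then show ?thesis using fixed[of "Yg j"] Y pgen_free_inj[of "Yg j" "Yg j'"] by simp
next
  case Z
  then show ?thesis using shape by (simp add: theta4_shape_def)
qed

lemma theta4_kernel_subset:
  assumes r4: "is_rep n (gens2n1 n) (K_rels n) (theta4_sig n) (theta4_rho n) h4"
    and r: "is_rep n (gens2n n) {} (theta_sig n) (theta_rho n) h"
  shows "kernel (FVB n) (AutR (Kgrp n)) h4 \<subseteq> kernel (FVB n) (AutR (F2n n)) h"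
  by (rule kernel_subset_theta_kernel[OF r r4 induces_z_to_one(2)])
     (auto elim!: gens2n1_cases simp: induced_hom_simps[OF induces_z_to_one(2)] z_to_one_def
       theta_sig_def theta_rho_def theta4_sig_def theta3_sig_def theta4_rho_def swap_xy_def Let_def
       conjg_def pgen_closed presented_group_closed presented_group_simps)

lemma theta_kernel_subset_theta4:
  assumes r4: "is_rep n (gens2n1 n) (K_rels n) (theta4_sig n) (theta4_rho n) h4"
    and r: "is_rep n (gens2n n) {} (theta_sig n) (theta_rho n) h"
  shows "kernel (FVB n) (AutR (F2n n)) h \<subseteq> kernel (FVB n) (AutR (Kgrp n)) h4"
proof
  fix x
  assume xk: "x \<in> kernel (FVB n) (AutR (F2n n)) h"
  then have x: "x \<in> carrier (FVB n)" by (simp add: kernel_def)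
  then show "x \<in> kernel (FVB n) (AutR (Kgrp n)) h4"
    using xk theta4_shape_fixes[OF theta4_shape_rep[OF r r4 x]]
    by (simp add: kernel_rep_iff[OF r x] kernel_rep_iff[OF r4 x])
qed

lemma theta4_kernel:
  "is_rep n (gens2n1 n) (K_rels n) (theta4_sig n) (theta4_rho n) h4 \<Longrightarrow>
   is_rep n (gens2n n) {} (theta_sig n) (theta_rho n) h \<Longrightarrow>
   kernel (FVB n) (AutR (Kgrp n)) h4 = kernel (FVB n) (AutR (F2n n)) h"
  by (rule equalityI[OF theta4_kernel_subset theta_kernel_subset_theta4])

theorem theorem6:
  fixes n :: nat
  shows
    \<comment> \<open>(1) existence of the representations\<close>
    "(\<forall>m::int. \<exists>h. is_rep n (gens2n n) {} (theta1_sig n m) (theta1_rho n m) h)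
   \<and> (\<exists>h. is_rep n (gens2n1 n) {} (theta2_sig n) (theta2_rho n) h)
   \<and> (\<exists>h. is_rep n (gens2n1 n) (K_rels n) (theta3_sig n) (theta3_rho n) h)
   \<and> (\<exists>h. is_rep n (gens2n1 n) (K_rels n) (theta4_sig n) (theta4_rho n) h)
    \<comment> \<open>(2) equality of kernels\<close>
   \<and> (\<forall>m::int. \<forall>h1 h. m \<noteq> 0 \<longrightarrow>
        is_rep n (gens2n n) {} (theta1_sig n m) (theta1_rho n m) h1 \<longrightarrow>
        is_rep n (gens2n n) {} (theta_sig n) (theta_rho n) h \<longrightarrow>
        kernel (FVB n) (AutR (F2n n)) h1 = kernel (FVB n) (AutR (F2n n)) h)
   \<and> (\<forall>h2 h. is_rep n (gens2n1 n) {} (theta2_sig n) (theta2_rho n) h2 \<longrightarrow>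
        is_rep n (gens2n n) {} (theta_sig n) (theta_rho n) h \<longrightarrow>
        kernel (FVB n) (AutR (F2n1 n)) h2 = kernel (FVB n) (AutR (F2n n)) h)
   \<and> (\<forall>h3 h. is_rep n (gens2n1 n) (K_rels n) (theta3_sig n) (theta3_rho n) h3 \<longrightarrow>
        is_rep n (gens2n n) {} (theta_sig n) (theta_rho n) h \<longrightarrow>
        kernel (FVB n) (AutR (Kgrp n)) h3 = kernel (FVB n) (AutR (F2n n)) h)
   \<and> (\<forall>h4 h. is_rep n (gens2n1 n) (K_rels n) (theta4_sig n) (theta4_rho n) h4 \<longrightarrow>
        is_rep n (gens2n n) {} (theta_sig n) (theta_rho n) h \<longrightarrow>
        kernel (FVB n) (AutR (Kgrp n)) h4 = kernel (FVB n) (AutR (F2n n)) h)"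
proof (intro conjI allI impI)
  show "\<exists>h. is_rep n (gens2n n) {} (theta1_sig n m) (theta1_rho n m) h" for m
    by (rule theta1_is_rep)
  show "\<exists>h. is_rep n (gens2n1 n) {} (theta2_sig n) (theta2_rho n) h"
    by (rule theta2_is_rep)
  show "\<exists>h. is_rep n (gens2n1 n) (K_rels n) (theta3_sig n) (theta3_rho n) h"
    by (rule theta3_is_rep)
  show "\<exists>h. is_rep n (gens2n1 n) (K_rels n) (theta4_sig n) (theta4_rho n) h"
    by (rule theta4_is_rep)
qed (metis theta1_kernel theta2_kernel theta3_kernel theta4_kernel)+

end
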